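(* Let $\Sigma$ be a finite ranked set, $r\in\mathbb{N}$ and $M\subseteq\mathbb{N}$ finite. Let $\approx$ be the equivalence relation on $\mathsf{H}\Sigma$ identifying two sourced hypergraphs iff they have the same arity and their models satisfy the same sentences of counting MSO of quantifier rank at most $r$ using only moduli from $M$. Then $\approx$ is a congruence of the $\mathsf{H}$-algebra $\mathsf{H}\Sigma$.
   Context: A ranked set is a set in which each element has an arity in $\{0,1,2,\dots\}$. A sourced hypergraph of arity $n$ over $\Sigma$: finite vertex set, finite ranked set of hyperedges labelled arity-preservingly by $\Sigma$, incidence mapping each $m$-ary hyperedge $e$ to a non-repeating list $e[1],\dots,e[m]$ of vertices, injective sources $\{1,\dots,n\}\to$ vertices; $\mathsf{H}\Sigma$ denotes these up to isomorphism. Flattening of $K\in\mathsf{H}\mathsf{H}\Sigma$: hyperedges $(e,f)$, $e$ a hyperedge of $K$, $f$ a hyperedge of the label of $e$ (label from $f$); vertices: vertices of $K$ and pairs $(e,v)$ with $v$ a non-source vertex of the label of $e$; sources from $K$; incidence of $(e,f)$ is that of $f$ with $v\mapsto(e,v)$ for non-sources and $v\mapsto e[i]$ if $v$ is the $i$-th source of the label of $e$. $\mathsf{H}\Sigma$ is an $\mathsf{H}$-algebra with flattening as product. A polynomial operation with variables a ranked set $X$ is given by $t\in\mathsf{H}(\mathsf{H}\Sigma+X)$ and maps an arity-preserving $\eta:X\to\mathsf{H}\Sigma$ to the flattening of $t$ with each label $x\in X$ replaced by $\eta(x)$. A congruence is an equivalence relation such that for every polynomial operation, componentwise equivalent valuations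 give equivalent results. The model of $K\in\mathsf{H}\Sigma$ has universe the disjoint union of vertices and hyperedges, a unary relation per label $a\in\Sigma$, binary relations $\{(e,v):e[i]=v\}$ for $i$ up to the maximal arity in $\Sigma$, and constants for the sources. Counting MSO here is MSO extended with predicates $|Y|\equiv k\bmod m$, a set-inclusion predicate, a singleton predicate, and set constants $[\psi]$ for every quantifier-free formula $\psi(x)$ with one free variable; quantifier rank counts first- and second-order quantifiers alike. *)

theory Defs
  imports Main "HOL-Library.Nat_Bijection"
begin

text \<open>Vertices and hyperedges are
  natural numbers; the incidence of a hyperedge is a list of vertices, the sources are
  a list of vertices (the i-th source is the (i-1)-th list element).\<close>

record 'l hg =
  verts :: "nat set"
  edges :: "nat set"
  lab   :: "nat \<Rightarrow> 'l"
  inc   :: "nat \<Rightarrow> nat list"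
  src   :: "nat list"

definition arity :: "'l hg \<Rightarrow> nat" where
  "arity G = length (src G)"

definition wf_hg :: "'l set \<Rightarrow> ('l \<Rightarrow> nat) \<Rightarrow> 'l hg \<Rightarrow> bool" where
  "wf_hg Lab rk G \<longleftrightarrow>
     finite (verts G) \<and> finite (edges G) \<and>
     (\<forall>e\<in>edges G. lab G e \<in> Lab \<and> length (inc G e) = rk (lab G e)
                    \<and> distinct (inc G e) \<and> set (inc G e) \<subseteq> verts G) \<and>
     distinct (src G) \<and> set (src G) \<subseteq> verts G"

text \<open>The carrier H Sigma (concrete representatives; everything below is invariant
  under isomorphism).\<close>
definition HS :: "'a set \<Rightarrow> ('a \<Rightarrow> nat) \<Rightarrow> 'a hg set" where
  "HS Sig ar = {G. wf_hg Sig ar G}"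

text \<open>Encoding of the vertices/edges of the flattening as natural numbers:
  vertex v of K becomes 2v, pair (e,v) becomes 2*prod_encode(e,v)+1,
  hyperedge (e,f) becomes prod_encode(e,f).\<close>

definition flat_vmap :: "'a hg hg \<Rightarrow> nat \<Rightarrow> nat \<Rightarrow> nat" where
  "flat_vmap K e v =
     (if v \<in> set (src (lab K e))
      then 2 * (inc K e ! (LEAST i. i < length (src (lab K e)) \<and> src (lab K e) ! i = v))
      else 2 * prod_encode (e, v) + 1)"

definition flat :: "'a hg hg \<Rightarrow> 'a hg" where
  "flat K = \<lparr> verts = (\<lambda>v. 2 * v) ` verts K
                     \<union> {2 * prod_encode (e, v) + 1 | e v.
                          e \<in> edges K \<and> v \<in> verts (lab K e) \<and> v \<notin> set (src (lab K e))},
             edges = {prod_encode (e, f) | e f. e \<in> edges K \<and> f \<in> edges (lab K e)},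
             lab = (\<lambda>d. case prod_decode d of (e, f) \<Rightarrow> lab (lab K e) f),
             inc = (\<lambda>d. case prod_decode d of (e, f) \<Rightarrow>
                           map (flat_vmap K e) (inc (lab K e) f)),
             src = map (\<lambda>v. 2 * v) (src K) \<rparr>"

definition sum_rank :: "('x \<Rightarrow> nat) \<Rightarrow> ('a hg + 'x) \<Rightarrow> nat" where
  "sum_rank arx l = (case l of Inl G \<Rightarrow> arity G | Inr x \<Rightarrow> arx x)"

definition poly_terms :: "'a set \<Rightarrow> ('a \<Rightarrow> nat) \<Rightarrow> 'x set \<Rightarrow> ('x \<Rightarrow> nat) \<Rightarrow> ('a hg + 'x) hg set" where
  "poly_terms Sig ar Xs arx = {t. wf_hg (Inl ` HS Sig ar \<union> Inr ` Xs) (sum_rank arx) t}"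

definition valuations :: "'a set \<Rightarrow> ('a \<Rightarrow> nat) \<Rightarrow> 'x set \<Rightarrow> ('x \<Rightarrow> nat) \<Rightarrow> ('x \<Rightarrow> 'a hg) set" where
  "valuations Sig ar Xs arx = {\<eta>. \<forall>x\<in>Xs. \<eta> x \<in> HS Sig ar \<and> arity (\<eta> x) = arx x}"

definition subst_vars :: "('x \<Rightarrow> 'a hg) \<Rightarrow> ('a hg + 'x) hg \<Rightarrow> 'a hg hg" where
  "subst_vars \<eta> t = \<lparr> verts = verts t, edges = edges t,
       lab = (\<lambda>e. case lab t e of Inl G \<Rightarrow> G | Inr x \<Rightarrow> \<eta> x),
       inc = inc t, src = src t \<rparr>"

definition poly_op :: "('a hg + 'x) hg \<Rightarrow> ('x \<Rightarrow> 'a hg) \<Rightarrow> 'a hg" where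
  "poly_op t \<eta> = flat (subst_vars \<eta> t)"

definition congruence_wrt ::
  "'a set \<Rightarrow> ('a \<Rightarrow> nat) \<Rightarrow> ('a hg \<times> 'a hg) set \<Rightarrow> 'x set \<Rightarrow> ('x \<Rightarrow> nat) \<Rightarrow> bool" where
  "congruence_wrt Sig ar R Xs arx \<longleftrightarrow>
     equiv (HS Sig ar) R \<and>
     (\<forall>t \<in> poly_terms Sig ar Xs arx. \<forall>\<eta> \<in> valuations Sig ar Xs arx.
        \<forall>\<eta>' \<in> valuations Sig ar Xs arx.
          (\<forall>x\<in>Xs. (\<eta> x, \<eta>' x) \<in> R) \<longrightarrow> (poly_op t \<eta>, poly_op t \<eta>') \<in> R)"

text \<open>First-order terms: variables and source constants (Cst i is the i-th source, i >= 1).\<close>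
datatype fterm = FVar nat | Cst nat

text \<open>Formulas and set terms. SConst psi is the set constant [psi], where psi has the
  single free first-order variable FVar 0.\<close>
datatype 'a cmso =
    Eq fterm fterm
  | Lab 'a fterm
  | Inc nat fterm fterm
  | Mem fterm "'a sterm"
  | CardMod "'a sterm" nat nat
  | Subset "'a sterm" "'a sterm"
  | Single "'a sterm"
  | Neg "'a cmso"
  | Conj "'a cmso" "'a cmso"
  | Ex1 nat "'a cmso"
  | Ex2 nat "'a cmso"
and 'a sterm = SVar nat | SConst "'a cmso"

fun fv1_t :: "fterm \<Rightarrow> nat set" where
  "fv1_t (FVar x) = {x}" | "fv1_t (Cst i) = {}"

fun fv1 :: "'a cmso \<Rightarrow> nat set" and fv1_s :: "'a sterm \<Rightarrow> nat set" where
  "fv1 (Eq s t) = fv1_t s \<union> fv1_t t"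
| "fv1 (Lab a t) = fv1_t t"
| "fv1 (Inc i s t) = fv1_t s \<union> fv1_t t"
| "fv1 (Mem t S) = fv1_t t \<union> fv1_s S"
| "fv1 (CardMod S k m) = fv1_s S"
| "fv1 (Subset S T) = fv1_s S \<union> fv1_s T"
| "fv1 (Single S) = fv1_s S"
| "fv1 (Neg \<phi>) = fv1 \<phi>"
| "fv1 (Conj \<phi> \<psi>) = fv1 \<phi> \<union> fv1 \<psi>"
| "fv1 (Ex1 x \<phi>) = fv1 \<phi> - {x}"
| "fv1 (Ex2 X \<phi>) = fv1 \<phi>"
| "fv1_s (SVar X) = {}"
| "fv1_s (SConst \<psi>) = {}"

fun fv2 :: "'a cmso \<Rightarrow> nat set" and fv2_s :: "'a sterm \<Rightarrow> nat set" where
  "fv2 (Eq s t) = {}"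
| "fv2 (Lab a t) = {}"
| "fv2 (Inc i s t) = {}"
| "fv2 (Mem t S) = fv2_s S"
| "fv2 (CardMod S k m) = fv2_s S"
| "fv2 (Subset S T) = fv2_s S \<union> fv2_s T"
| "fv2 (Single S) = fv2_s S"
| "fv2 (Neg \<phi>) = fv2 \<phi>"
| "fv2 (Conj \<phi> \<psi>) = fv2 \<phi> \<union> fv2 \<psi>"
| "fv2 (Ex1 x \<phi>) = fv2 \<phi>"
| "fv2 (Ex2 X \<phi>) = fv2 \<phi> - {X}"
| "fv2_s (SVar X) = {X}"
| "fv2_s (SConst \<psi>) = {}"

text \<open>Quantifier rank: first- and second-order quantifiers count alike; set constants
  are quantifier-free.\<close>
fun qrank :: "'a cmso \<Rightarrow> nat" where
  "qrank (Neg \<phi>) = qrank \<phi>"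
| "qrank (Conj \<phi> \<psi>) = max (qrank \<phi>) (qrank \<psi>)"
| "qrank (Ex1 x \<phi>) = Suc (qrank \<phi>)"
| "qrank (Ex2 X \<phi>) = Suc (qrank \<phi>)"
| "qrank _ = 0"

fun ok_t :: "nat \<Rightarrow> fterm \<Rightarrow> bool" where
  "ok_t n (FVar x) = True" | "ok_t n (Cst i) = (1 \<le> i \<and> i \<le> n)"

fun ok :: "'a set \<Rightarrow> nat \<Rightarrow> nat \<Rightarrow> nat set \<Rightarrow> 'a cmso \<Rightarrow> bool"
and ok_s :: "'a set \<Rightarrow> nat \<Rightarrow> nat \<Rightarrow> nat set \<Rightarrow> 'a sterm \<Rightarrow> bool" where
  "ok Sig mx n M (Eq s t) = (ok_t n s \<and> ok_t n t)"
| "ok Sig mx n M (Lab a t) = (a \<in> Sig \<and> ok_t n t)"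
| "ok Sig mx n M (Inc i s t) = (1 \<le> i \<and> i \<le> mx \<and> ok_t n s \<and> ok_t n t)"
| "ok Sig mx n M (Mem t S) = (ok_t n t \<and> ok_s Sig mx n M S)"
| "ok Sig mx n M (CardMod S k m) = (m \<in> M \<and> ok_s Sig mx n M S)"
| "ok Sig mx n M (Subset S T) = (ok_s Sig mx n M S \<and> ok_s Sig mx n M T)"
| "ok Sig mx n M (Single S) = ok_s Sig mx n M S"
| "ok Sig mx n M (Neg \<phi>) = ok Sig mx n M \<phi>"
| "ok Sig mx n M (Conj \<phi> \<psi>) = (ok Sig mx n M \<phi> \<and> ok Sig mx n M \<psi>)"
| "ok Sig mx n M (Ex1 x \<phi>) = ok Sig mx n M \<phi>"
| "ok Sig mx n M (Ex2 X \<phi>) = ok Sig mx n M \<phi>"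
| "ok_s Sig mx n M (SVar X) = True"
| "ok_s Sig mx n M (SConst \<psi>) =
     (ok Sig mx n M \<psi> \<and> qrank \<psi> = 0 \<and> fv1 \<psi> \<subseteq> {0} \<and> fv2 \<psi> = {})"

definition univ :: "'a hg \<Rightarrow> (nat + nat) set" where
  "univ G = Inl ` verts G \<union> Inr ` edges G"

fun tval :: "'a hg \<Rightarrow> (nat \<Rightarrow> nat + nat) \<Rightarrow> fterm \<Rightarrow> nat + nat" where
  "tval G \<nu> (FVar x) = \<nu> x"
| "tval G \<nu> (Cst i) = Inl (src G ! (i - 1))"

fun sat :: "'a hg \<Rightarrow> (nat \<Rightarrow> nat + nat) \<Rightarrow> (nat \<Rightarrow> (nat + nat) set) \<Rightarrow> 'a cmso \<Rightarrow> bool"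
and seval :: "'a hg \<Rightarrow> (nat \<Rightarrow> nat + nat) \<Rightarrow> (nat \<Rightarrow> (nat + nat) set) \<Rightarrow> 'a sterm \<Rightarrow> (nat + nat) set"
where
  "sat G \<nu> \<sigma> (Eq s t) = (tval G \<nu> s = tval G \<nu> t)"
| "sat G \<nu> \<sigma> (Lab a t) = (\<exists>e\<in>edges G. tval G \<nu> t = Inr e \<and> lab G e = a)"
| "sat G \<nu> \<sigma> (Inc i s t) = (\<exists>e\<in>edges G. \<exists>v. tval G \<nu> s = Inr e \<and> tval G \<nu> t = Inl v
                              \<and> 1 \<le> i \<and> i \<le> length (inc G e) \<and> inc G e ! (i - 1) = v)"
| "sat G \<nu> \<sigma> (Mem t S) = (tval G \<nu> t \<in> seval G \<nu> \<sigma> S)"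
| "sat G \<nu> \<sigma> (CardMod S k m) = (card (seval G \<nu> \<sigma> S) mod m = k mod m)"
| "sat G \<nu> \<sigma> (Subset S T) = (seval G \<nu> \<sigma> S \<subseteq> seval G \<nu> \<sigma> T)"
| "sat G \<nu> \<sigma> (Single S) = (\<exists>u. seval G \<nu> \<sigma> S = {u})"
| "sat G \<nu> \<sigma> (Neg \<phi>) = (\<not> sat G \<nu> \<sigma> \<phi>)"
| "sat G \<nu> \<sigma> (Conj \<phi> \<psi>) = (sat G \<nu> \<sigma> \<phi> \<and> sat G \<nu> \<sigma> \<psi>)"
| "sat G \<nu> \<sigma> (Ex1 x \<phi>) = (\<exists>u\<in>univ G. sat G (\<nu>(x := u)) \<sigma> \<phi>)"
| "sat G \<nu> \<sigma> (Ex2 X \<phi>) = (\<exists>U\<subseteq>univ G. sat G \<nu> (\<sigma>(X := U)) \<phi>)"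
| "seval G \<nu> \<sigma> (SVar X) = \<sigma> X"
| "seval G \<nu> \<sigma> (SConst \<psi>) = {u \<in> univ G. sat G (\<nu>(0 := u)) \<sigma> \<psi>}"

definition max_arity :: "'a set \<Rightarrow> ('a \<Rightarrow> nat) \<Rightarrow> nat" where
  "max_arity Sig ar = Max (insert 0 (ar ` Sig))"

definition sentences :: "'a set \<Rightarrow> ('a \<Rightarrow> nat) \<Rightarrow> nat set \<Rightarrow> nat \<Rightarrow> nat \<Rightarrow> 'a cmso set" where
  "sentences Sig ar M r n =
     {\<phi>. ok Sig (max_arity Sig ar) n M \<phi> \<and> fv1 \<phi> = {} \<and> fv2 \<phi> = {} \<and> qrank \<phi> \<le> r}"

definition models :: "'a hg \<Rightarrow> 'a cmso \<Rightarrow> bool" where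
  "models G \<phi> = sat G (\<lambda>_. Inl 0) (\<lambda>_. {}) \<phi>"

definition cmso_equiv :: "'a set \<Rightarrow> ('a \<Rightarrow> nat) \<Rightarrow> nat set \<Rightarrow> nat \<Rightarrow> ('a hg \<times> 'a hg) set" where
  "cmso_equiv Sig ar M r =
     {(G, H). G \<in> HS Sig ar \<and> H \<in> HS Sig ar \<and> arity G = arity H \<and>
        (\<forall>\<phi> \<in> sentences Sig ar M r (arity G). models G \<phi> \<longleftrightarrow> models H \<phi>)}"

end

theory Submission
  imports Defs
begin

(*
  A polynomial operation flattens a term whose hyperedges are labelled by hypergraphs, so it
  suffices to replace the labels one hyperedge at a time by equivalent ones. Replacing the
  label G of a hyperedge e by G' changes the flattening only inside the copy of G glued in
  along the incidence of e. The two flattenings D and D' satisfy the same sentences of rank at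
  most r by a back-and-forth argument whose positions are pairs of assignments that agree
  outside the glued copies and whose restrictions to G and G' satisfy the same formulas of the
  remaining rank. Atomic formulas of D reduce to atomic formulas of G; in particular a
  quantifier-free set constant of D restricts to a set constant of G. For a quantifier step,
  if no element (or subset) of G' answered a move in G, each candidate would be refuted by a
  formula of the remaining rank, and since G' is finite the quantified conjunction of finitely
  many of them would separate G from G'.
*)

lemma fv1_s_empty [simp]: "fv1_s S = {}"
  by (cases S) auto

lemma sat_coincidence:
  "ok Sig mx n M \<phi> \<Longrightarrow> (\<forall>x\<in>fv1 \<phi>. \<nu> x = \<nu>' x) \<Longrightarrow> (\<forall>X\<in>fv2 \<phi>. \<sigma> X = \<sigma>' X) \<Longrightarrow>
     sat G \<nu> \<sigma> \<phi> = sat G \<nu>' \<sigma>' \<phi>"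
  "ok_s Sig mx n M S \<Longrightarrow> (\<forall>X\<in>fv2_s S. \<sigma> X = \<sigma>' X) \<Longrightarrow>
     seval G \<nu> \<sigma> S = seval G \<nu>' \<sigma>' S"
proof (induction \<phi> and S arbitrary: \<nu> \<nu>' \<sigma> \<sigma>' and \<nu> \<nu>' \<sigma> \<sigma>' rule: cmso.induct sterm.induct)
  case (Eq s t)
  then show ?case by (cases s; cases t) auto
next
  case (Lab a t)
  then show ?case by (cases t) auto
next
  case (Inc i s t)
  then show ?case by (cases s; cases t) auto
next
  case (Mem t S)
  then have "seval G \<nu> \<sigma> S = seval G \<nu>' \<sigma>' S" by auto
  with Mem.prems show ?case by (cases t) auto
next
  case (Ex1 x \<phi>)
  then have "\<And>u. sat G (\<nu>(x := u)) \<sigma> \<phi> = sat G (\<nu>'(x := u)) \<sigma>' \<phi>" by auto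
  then show ?case by simp
next
  case (Ex2 X \<phi>)
  then have "\<And>U. sat G \<nu> (\<sigma>(X := U)) \<phi> = sat G \<nu>' (\<sigma>'(X := U)) \<phi>" by auto
  then show ?case by simp
next
  case (SConst \<psi>)
  then have "\<And>u. sat G (\<nu>(0 := u)) \<sigma> \<psi> = sat G (\<nu>'(0 := u)) \<sigma>' \<psi>" by (auto simp: subset_iff)
  then show ?case by simp
next
  case (CardMod S k m)
  then have "seval G \<nu> \<sigma> S = seval G \<nu>' \<sigma>' S" by auto
  then show ?case by simp
next
  case (Subset S T)
  then have "seval G \<nu> \<sigma> S = seval G \<nu>' \<sigma>' S" "seval G \<nu> \<sigma> T = seval G \<nu>' \<sigma>' T" by auto
  then show ?case by simp
next
  case (Single S)
  then have "seval G \<nu> \<sigma> S = seval G \<nu>' \<sigma>' S" by auto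
  then show ?case by simp
next
  case (Neg \<phi>)
  then show ?case by simp
next
  case (Conj \<phi> \<psi>)
  then have "sat G \<nu> \<sigma> \<phi> = sat G \<nu>' \<sigma>' \<phi>" "sat G \<nu> \<sigma> \<psi> = sat G \<nu>' \<sigma>' \<psi>" by auto
  then show ?case by simp
qed simp

lemma sat_closed:
  "ok Sig mx n M \<chi> \<Longrightarrow> fv1 \<chi> = {} \<Longrightarrow> fv2 \<chi> = {} \<Longrightarrow> sat G \<nu> \<sigma> \<chi> = models G \<chi>"
  unfolding models_def by (rule sat_coincidence) auto

text \<open>Closed and quantifier-free over every vocabulary, even without source constants.\<close>

definition ctrue :: "'a cmso" where
  "ctrue = Subset (SConst (Eq (FVar 0) (FVar 0))) (SConst (Eq (FVar 0) (FVar 0)))"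

definition cfalse :: "'a cmso" where
  "cfalse = Neg ctrue"

lemma ctrue_simps [simp]:
  "sat G \<nu> \<sigma> ctrue" "fv1 ctrue = {}" "fv2 ctrue = {}" "qrank ctrue = 0" "ok Sig mx n M ctrue"
  by (auto simp: ctrue_def)

lemma cfalse_simps [simp]:
  "\<not> sat G \<nu> \<sigma> cfalse" "fv1 cfalse = {}" "fv2 cfalse = {}" "qrank cfalse = 0" "ok Sig mx n M cfalse"
  by (auto simp: cfalse_def)

definition truth :: "bool \<Rightarrow> 'a cmso" where
  "truth b = (if b then ctrue else cfalse)"

lemma truth_simps [simp]:
  "sat G \<nu> \<sigma> (truth b) = b" "fv1 (truth b) = {}" "fv2 (truth b) = {}" "qrank (truth b) = 0"
  "ok Sig mx n M (truth b)"
  by (simp_all add: truth_def)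

definition conj_list :: "'a cmso list \<Rightarrow> 'a cmso" where
  "conj_list l = foldr Conj l ctrue"

lemma conj_list_simps [simp]:
  "sat G \<nu> \<sigma> (conj_list l) \<longleftrightarrow> (\<forall>\<phi>\<in>set l. sat G \<nu> \<sigma> \<phi>)"
  "fv1 (conj_list l) = (\<Union>\<phi>\<in>set l. fv1 \<phi>)"
  "fv2 (conj_list l) = (\<Union>\<phi>\<in>set l. fv2 \<phi>)"
  "qrank (conj_list l) \<le> k \<longleftrightarrow> (\<forall>\<phi>\<in>set l. qrank \<phi> \<le> k)"
  "qrank (conj_list l) = 0 \<longleftrightarrow> (\<forall>\<phi>\<in>set l. qrank \<phi> = 0)"
  "ok Sig mx n M (conj_list l) \<longleftrightarrow> (\<forall>\<phi>\<in>set l. ok Sig mx n M \<phi>)"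
  by (induction l) (auto simp: conj_list_def)

lemma sat_conj_list_map: "sat G \<nu> \<sigma> (conj_list (map f xs)) \<longleftrightarrow> (\<forall>x\<in>set xs. sat G \<nu> \<sigma> (f x))"
  by simp

definition Disj :: "'a cmso \<Rightarrow> 'a cmso \<Rightarrow> 'a cmso" where
  "Disj \<phi> \<psi> = Neg (Conj (Neg \<phi>) (Neg \<psi>))"

lemma Disj_simps [simp]:
  "sat G \<nu> \<sigma> (Disj \<phi> \<psi>) \<longleftrightarrow> sat G \<nu> \<sigma> \<phi> \<or> sat G \<nu> \<sigma> \<psi>"
  "fv1 (Disj \<phi> \<psi>) = fv1 \<phi> \<union> fv1 \<psi>" "fv2 (Disj \<phi> \<psi>) = fv2 \<phi> \<union> fv2 \<psi>"
  "qrank (Disj \<phi> \<psi>) = max (qrank \<phi>) (qrank \<psi>)"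
  "ok Sig mx n M (Disj \<phi> \<psi>) \<longleftrightarrow> ok Sig mx n M \<phi> \<and> ok Sig mx n M \<psi>"
  by (auto simp: Disj_def)

text \<open>Source constants are 1-based: \<open>Cst (Suc l)\<close> denotes \<open>src G ! l\<close>.\<close>

definition is_source_in :: "nat \<Rightarrow> nat list \<Rightarrow> 'a cmso" where
  "is_source_in x L = Neg (conj_list (map (\<lambda>l. Neg (Eq (FVar x) (Cst (Suc l)))) L))"

definition not_source :: "nat \<Rightarrow> nat \<Rightarrow> 'a cmso" where
  "not_source x n = Neg (is_source_in x [0..<n])"

lemma sat_is_source_in [simp]:
  "sat G \<nu> \<sigma> (is_source_in x L) \<longleftrightarrow> (\<exists>l\<in>set L. \<nu> x = Inl (src G ! l))"
  by (auto simp: is_source_in_def)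

lemma is_source_in_simps [simp]:
  "fv1 (is_source_in x L) \<subseteq> {x}" "fv2 (is_source_in x L) = {}" "qrank (is_source_in x L) = 0"
  "ok Sig mx n M (is_source_in x L) \<longleftrightarrow> set L \<subseteq> {..<n}"
  by (auto simp: is_source_in_def Suc_le_eq)

lemma sat_not_source [simp]:
  "n = length (src G) \<Longrightarrow> sat G \<nu> \<sigma> (not_source x n) \<longleftrightarrow> \<nu> x \<notin> Inl ` set (src G)"
  by (auto simp: not_source_def in_set_conv_nth image_iff Bex_def)

lemma not_source_simps [simp]:
  "fv1 (not_source x n) \<subseteq> {x}" "fv2 (not_source x n) = {}" "qrank (not_source x n) = 0"
  "ok Sig mx n M (not_source x n)"
  by (auto simp: not_source_def)

definition source_trace :: "nat \<Rightarrow> nat set \<Rightarrow> nat \<Rightarrow> 'a cmso" where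
  "source_trace X S n = conj_list (map (\<lambda>l. if l \<in> S then Mem (Cst (Suc l)) (SVar X)
                                            else Neg (Mem (Cst (Suc l)) (SVar X))) [0..<n])"

lemma sat_source_trace [simp]:
  "sat G \<nu> \<sigma> (source_trace X S n) \<longleftrightarrow> (\<forall>l<n. Inl (src G ! l) \<in> \<sigma> X \<longleftrightarrow> l \<in> S)"
  unfolding source_trace_def sat_conj_list_map by (auto split: if_splits)

lemma source_trace_simps [simp]:
  "fv1 (source_trace X S n) = {}" "fv2 (source_trace X S n) \<subseteq> {X}"
  "qrank (source_trace X S n) = 0" "ok Sig mx n M (source_trace X S n)"
  by (auto simp: source_trace_def)

lemma sat_distinguishing:
  assumes "P \<phi>" "P (Neg \<phi>)" "sat G \<nu> \<sigma> \<phi> \<noteq> sat G' \<nu>' \<sigma>' \<phi>"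
  shows "\<exists>\<psi>. P \<psi> \<and> sat G \<nu> \<sigma> \<psi> \<and> \<not> sat G' \<nu>' \<sigma>' \<psi>"
proof (cases "sat G \<nu> \<sigma> \<phi>")
  case True
  then show ?thesis using assms by blast
next
  case False
  then show ?thesis using assms by (intro exI[of _ "Neg \<phi>"]) simp
qed

lemma distinguishing_conj:
  assumes "finite C" and "\<And>c. c \<in> C \<Longrightarrow> \<exists>\<phi>. P \<phi> \<and> sat G \<nu> \<sigma> \<phi> \<and> \<not> sat G' (\<nu>' c) (\<sigma>' c) \<phi>"
  obtains \<Phi> where "\<forall>\<phi>\<in>set \<Phi>. P \<phi>" "sat G \<nu> \<sigma> (conj_list \<Phi>)"
    "\<And>c. c \<in> C \<Longrightarrow> \<not> sat G' (\<nu>' c) (\<sigma>' c) (conj_list \<Phi>)"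
proof -
  obtain ch where ch: "\<And>c. c \<in> C \<Longrightarrow> P (ch c) \<and> sat G \<nu> \<sigma> (ch c) \<and> \<not> sat G' (\<nu>' c) (\<sigma>' c) (ch c)"
    using assms(2) by metis
  obtain cs where "set cs = C" using assms(1) finite_list by blast
  show thesis by (rule that[of "map ch cs"]) (use ch \<open>set cs = C\<close> in auto)
qed

lemma sat_cong_edges:
  assumes same: "verts G' = verts G" "edges G' = edges G" "src G' = src G"
    "\<And>d. d \<in> edges G \<Longrightarrow> lab G' d = lab G d \<and> inc G' d = inc G d"
  shows "sat G' \<nu> \<sigma> \<phi> = sat G \<nu> \<sigma> \<phi>" and "seval G' \<nu> \<sigma> S = seval G \<nu> \<sigma> S"
proof -
  have univ: "univ G' = univ G" using same by (simp add: univ_def)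
  have tval: "tval G' \<nu> t = tval G \<nu> t" for \<nu> t by (cases t) (simp_all add: same)
  show "sat G' \<nu> \<sigma> \<phi> = sat G \<nu> \<sigma> \<phi>" "seval G' \<nu> \<sigma> S = seval G \<nu> \<sigma> S"
  proof (induction \<phi> and S arbitrary: \<nu> \<sigma> and \<nu> \<sigma> rule: cmso.induct sterm.induct)
    case (Lab a t)
    then show ?case using same(2,4) by (simp add: tval)
  next
    case (Inc i s t)
    then show ?case using same(2,4) by (simp add: tval)
  qed (simp_all add: tval univ)
qed

lemma mod_add_right_cancel_nat:
  assumes "(a + s) mod m = (b + s) mod (m :: nat)"
  shows "a mod m = b mod m"
proof (cases "b \<le> a")
  case True
  then have "m dvd (a + s) - (b + s)" using assms mod_eq_dvd_iff_nat[of "b + s" "a + s" m] by simp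
  then show ?thesis using mod_eq_dvd_iff_nat[OF True] by simp
next
  case False
  then have "m dvd (b + s) - (a + s)" using assms mod_eq_dvd_iff_nat[of "a + s" "b + s" m] by simp
  then show ?thesis using mod_eq_dvd_iff_nat[of a b m] False by simp
qed

section \<open>Gluing a hypergraph into another one\<close>

definition internal :: "'a hg \<Rightarrow> (nat + nat) set" where
  "internal G = univ G - Inl ` set (src G)"

definition glue_corresp ::
  "(nat + nat) set \<Rightarrow> (nat + nat \<Rightarrow> nat + nat) \<Rightarrow> nat list \<Rightarrow> 'a hg \<Rightarrow> nat + nat \<Rightarrow> nat + nat \<Rightarrow> bool"
where
  "glue_corresp B dec E G w g \<longleftrightarrow>
     (w \<in> B \<and> g = dec w) \<or> (\<exists>l<length E. w = Inl (E ! l) \<and> g = Inl (src G ! l))"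

text \<open>\<open>D\<close> contains a copy of \<open>G\<close>: the internal elements of \<open>G\<close> sit in \<open>D\<close> as \<open>B\<close>
  (decoded by \<open>dec\<close>), and the sources of \<open>G\<close> are identified with the vertices \<open>E\<close> of \<open>D\<close>.
  This is how the label of a hyperedge \<open>e\<close> of \<open>K\<close> sits in \<open>flat K\<close>, with \<open>E\<close> the
  incidence list of \<open>e\<close>.\<close>

locale gluing =
  fixes D G :: "'a hg" and B :: "(nat + nat) set" and dec :: "nat + nat \<Rightarrow> nat + nat"
    and E :: "nat list"
  assumes finite_whole: "finite (univ D)"
    and finite_part: "finite (univ G)"
    and B_subset: "B \<subseteq> univ D"
    and inj_dec: "inj_on dec B"
    and dec_image: "dec ` B = internal G"
    and isl_dec: "b \<in> B \<Longrightarrow> isl (dec b) = isl b"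
    and length_E: "length E = length (src G)"
    and distinct_E: "distinct E"
    and distinct_src: "distinct (src G)"
    and src_in_univ: "Inl ` set (src G) \<subseteq> univ G"
    and E_outside: "Inl ` set E \<subseteq> univ D - B"
    and src_outside: "Inl ` set (src D) \<inter> B = {}"
    and outer_edge: "Inr d \<in> univ D - B \<Longrightarrow> Inl ` set (inc D d) \<inter> B = {}"
    and inner_edge: "Inr d \<in> B \<Longrightarrow> \<exists>f. dec (Inr d) = Inr f \<and> f \<in> edges G \<and> lab D d = lab G f \<and>
       list_all2 (\<lambda>v w. glue_corresp B dec E G (Inl v) (Inl w)) (inc D d) (inc G f)"
begin

abbreviation corr :: "nat + nat \<Rightarrow> nat + nat \<Rightarrow> bool" where
  "corr \<equiv> glue_corresp B dec E G"

lemma dec_internal: "b \<in> B \<Longrightarrow> dec b \<in> internal G"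
  using dec_image by blast

lemma dec_in_univ: "b \<in> B \<Longrightarrow> dec b \<in> univ G"
  using dec_internal by (simp add: internal_def)

lemma src_nth_in_set: "l < length E \<Longrightarrow> src G ! l \<in> set (src G)"
  using length_E by simp

lemma dec_not_source: "b \<in> B \<Longrightarrow> l < length E \<Longrightarrow> dec b \<noteq> Inl (src G ! l)"
  using dec_internal src_nth_in_set by (force simp: internal_def)

lemma E_not_in_B: "l < length E \<Longrightarrow> Inl (E ! l) \<notin> B"
  using E_outside nth_mem by blast

lemma src_not_in_B:
  assumes "1 \<le> j" "j \<le> length (src D)"
  shows "Inl (src D ! (j - 1)) \<notin> B"
proof -
  have "src D ! (j - 1) \<in> set (src D)" using assms by (intro nth_mem) simp
  then show ?thesis using src_outside by blast
qed

lemma univ_part: "univ G = internal G \<union> Inl ` set (src G)"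
  using src_in_univ by (auto simp: internal_def)

lemma corr_B: "w \<in> B \<Longrightarrow> corr w g \<longleftrightarrow> g = dec w"
  using E_not_in_B by (auto simp: glue_corresp_def)

lemma corr_E: "l < length E \<Longrightarrow> corr (Inl (E ! l)) g \<longleftrightarrow> g = Inl (src G ! l)"
  using E_not_in_B distinct_E by (auto simp: glue_corresp_def nth_eq_iff_index_eq)

lemma corr_src:
  assumes l: "l < length E"
  shows "corr w (Inl (src G ! l)) \<longleftrightarrow> w = Inl (E ! l)"
proof
  assume "corr w (Inl (src G ! l))"
  moreover have "\<not> (w \<in> B \<and> Inl (src G ! l) = dec w)" using dec_not_source[OF _ l] by metis
  ultimately obtain l' where "l' < length E" "w = Inl (E ! l')" "src G ! l = src G ! l'"
    by (auto simp: glue_corresp_def)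
  then show "w = Inl (E ! l)" using l length_E distinct_src by (simp add: nth_eq_iff_index_eq)
qed (use l in \<open>auto simp: glue_corresp_def\<close>)

lemma corr_unique:
  assumes "corr w g" "corr w' g"
  shows "w = w'"
proof (cases "w \<in> B")
  case True
  then have "w' \<in> B" "dec w = dec w'"
    using assms dec_not_source E_not_in_B by (auto simp: glue_corresp_def)
  then show ?thesis using True inj_dec by (simp add: inj_on_def)
next
  case False
  then obtain l where "l < length E" "w = Inl (E ! l)" "g = Inl (src G ! l)"
    using assms(1) by (auto simp: glue_corresp_def)
  then show ?thesis using assms corr_src by simp
qed

lemma corr_in_univ: "corr w g \<Longrightarrow> g \<in> univ G"
  using dec_in_univ src_in_univ src_nth_in_set by (auto simp: glue_corresp_def)

lemma corr_outside_B: "corr w g \<Longrightarrow> w \<notin> B \<Longrightarrow> \<exists>l<length E. w = Inl (E ! l)"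
  by (auto simp: glue_corresp_def)

lemma inner_edgeE:
  assumes "Inr d \<in> B"
  obtains f where "dec (Inr d) = Inr f" "f \<in> edges G" "d \<in> edges D" "lab D d = lab G f"
    "length (inc D d) = length (inc G f)"
    "\<And>i w. i < length (inc G f) \<Longrightarrow> corr w (Inl (inc G f ! i)) \<longleftrightarrow> w = Inl (inc D d ! i)"
proof -
  obtain f where f: "dec (Inr d) = Inr f" "f \<in> edges G" "lab D d = lab G f"
    and incs: "list_all2 (\<lambda>v w. corr (Inl v) (Inl w)) (inc D d) (inc G f)"
    using inner_edge assms by blast
  have "d \<in> edges D" using assms B_subset by (auto simp: univ_def)
  moreover have "corr w (Inl (inc G f ! i)) \<longleftrightarrow> w = Inl (inc D d ! i)" if "i < length (inc G f)" for i w
    using incs that corr_unique by (auto simp: list_all2_conv_all_nth)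
  ultimately show thesis using that f incs list_all2_lengthD by blast
qed

lemma outer_inc_not_in_B:
  "Inr d \<in> univ D - B \<Longrightarrow> i < length (inc D d) \<Longrightarrow> Inl (inc D d ! i) \<notin> B"
  using outer_edge nth_mem by blast

text \<open>Variables pointing outside \<open>B\<close> get the junk value \<open>Inl 0\<close>; they never occur free in
  the formulas evaluated under \<open>part_asg\<close>.\<close>

definition part_asg :: "(nat \<Rightarrow> nat + nat) \<Rightarrow> nat \<Rightarrow> nat + nat" where
  "part_asg \<nu> x = (if \<nu> x \<in> B then dec (\<nu> x) else Inl 0)"

definition part_set :: "(nat + nat) set \<Rightarrow> (nat + nat) set" where
  "part_set P = {g. \<exists>w\<in>P. corr w g}"

lemma part_asg_upd: "u \<in> B \<Longrightarrow> part_asg (\<nu>(x := u)) = (part_asg \<nu>)(x := dec u)"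
  by (auto simp: part_asg_def)

lemma part_asg_upd_outside: "u \<notin> B \<Longrightarrow> y \<noteq> x \<Longrightarrow> part_asg (\<nu>(x := u)) y = part_asg \<nu> y"
  by (simp add: part_asg_def)

lemma part_set_subset: "part_set P \<subseteq> univ G"
  using corr_in_univ by (auto simp: part_set_def)

lemma corr_dec: "b \<in> B \<Longrightarrow> corr w (dec b) \<longleftrightarrow> w = b"
  using corr_B corr_unique by blast

lemma dec_in_part_set: "b \<in> B \<Longrightarrow> dec b \<in> part_set P \<longleftrightarrow> b \<in> P"
  by (auto simp: part_set_def corr_dec)

lemma src_in_part_set: "l < length E \<Longrightarrow> Inl (src G ! l) \<in> part_set P \<longleftrightarrow> Inl (E ! l) \<in> P"
  using corr_src by (auto simp: part_set_def)

lemma part_set_eqI: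
  assumes "\<And>u. u \<in> B \<Longrightarrow> u \<in> P \<longleftrightarrow> Q (dec u)"
    and "\<And>l. l < length E \<Longrightarrow> Inl (E ! l) \<in> P \<longleftrightarrow> Q (Inl (src G ! l))"
  shows "part_set P = {g \<in> univ G. Q g}"
proof (intro set_eqI iffI)
  fix g assume "g \<in> part_set P"
  then show "g \<in> {g \<in> univ G. Q g}"
    using part_set_subset assms by (auto simp: part_set_def glue_corresp_def)
next
  fix g assume g: "g \<in> {g \<in> univ G. Q g}"
  then have "g \<in> dec ` B \<or> g \<in> Inl ` set (src G)" using univ_part dec_image by auto
  then consider u where "u \<in> B" "g = dec u" | l where "l < length E" "g = Inl (src G ! l)"
    using length_E by (auto simp: in_set_conv_nth)
  then show "g \<in> part_set P"
    using g assms dec_in_part_set src_in_part_set by cases auto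
qed

lemma part_set_realize:
  assumes "Y \<subseteq> univ G" "\<And>l. l < length E \<Longrightarrow> Inl (src G ! l) \<in> Y \<longleftrightarrow> Inl (E ! l) \<in> U"
  shows "part_set (U - B \<union> {b \<in> B. dec b \<in> Y}) = Y"
proof -
  have "part_set (U - B \<union> {b \<in> B. dec b \<in> Y}) = {g \<in> univ G. g \<in> Y}"
    using assms(2) E_not_in_B by (intro part_set_eqI) auto
  then show ?thesis using assms(1) by blast
qed

definition src_part :: "(nat + nat) set \<Rightarrow> (nat + nat) set" where
  "src_part A = {Inl (src G ! l) | l. l < length E \<and> Inl (E ! l) \<in> A}"

lemma part_set_split: "part_set P = dec ` (P \<inter> B) \<union> src_part (P - B)"
  using E_not_in_B by (auto simp: part_set_def src_part_def glue_corresp_def)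

lemma dec_disjoint_src_part: "dec ` C \<inter> src_part A = {}" if "C \<subseteq> B"
  using that dec_not_source by (fastforce simp: src_part_def)

lemma card_src_part: "card (src_part A) = card {l. l < length E \<and> Inl (E ! l) \<in> A}"
proof -
  have "src_part A = (\<lambda>l. Inl (src G ! l)) ` {l. l < length E \<and> Inl (E ! l) \<in> A}"
    by (auto simp: src_part_def)
  moreover have "inj_on (\<lambda>l. Inl (src G ! l) :: nat + nat) {l. l < length E \<and> Inl (E ! l) \<in> A}"
    using distinct_src length_E by (auto simp: inj_on_def nth_eq_iff_index_eq)
  ultimately show ?thesis by (simp add: card_image)
qed

lemma card_part_set:
  assumes "finite P"
  shows "card (part_set P) = card (P \<inter> B) + card {l. l < length E \<and> Inl (E ! l) \<in> P - B}"
proof -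
  have "card (part_set P) = card (dec ` (P \<inter> B)) + card (src_part (P - B))"
    unfolding part_set_split using assms dec_disjoint_src_part[of "P \<inter> B"]
    by (intro card_Un_disjoint) (auto simp: src_part_def)
  moreover have "inj_on dec (P \<inter> B)" using inj_dec inj_on_subset by blast
  ultimately show ?thesis by (simp add: card_image card_src_part)
qed

lemma seval_src_part:
  "seval G \<nu> \<sigma> (SConst (is_source_in 0 [l \<leftarrow> [0..<length E]. Inl (E ! l) \<in> A])) = src_part A"
  using src_nth_in_set src_in_univ by (auto simp: src_part_def)

lemma subset_iff_part_set: "P \<subseteq> Q \<longleftrightarrow> P - B \<subseteq> Q - B \<and> part_set P \<subseteq> part_set Q"
proof
  assume "P \<subseteq> Q"
  then show "P - B \<subseteq> Q - B \<and> part_set P \<subseteq> part_set Q" by (auto simp: part_set_def)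
next
  assume parts: "P - B \<subseteq> Q - B \<and> part_set P \<subseteq> part_set Q"
  show "P \<subseteq> Q"
  proof
    fix x assume "x \<in> P"
    then show "x \<in> Q"
      using parts dec_in_part_set by (cases "x \<in> B") blast+
  qed
qed

lemma singleton_iff_part_set:
  "(\<exists>u. P = {u}) \<longleftrightarrow>
     (P - B = {} \<and> (\<exists>g. part_set P = {g})) \<or> ((\<exists>u. P - B = {u}) \<and> part_set P \<subseteq> src_part (P - B))"
proof (cases "P - B = {}")
  case True
  then have "part_set P = dec ` P" "P \<subseteq> B"
    using part_set_split by (auto simp: src_part_def)
  moreover have "(\<exists>u. P = {u}) \<longleftrightarrow> (\<exists>g. dec ` P = {g})"
  proof
    assume "\<exists>g. dec ` P = {g}"
    then obtain g where g: "dec ` P = {g}" by blast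
    then obtain u where u: "u \<in> P" "dec u = g" by (metis imageE insertI1)
    have "w = u" if "w \<in> P" for w
      using that u g inj_dec \<open>P \<subseteq> B\<close> by (auto simp: inj_on_def)
    then show "\<exists>u. P = {u}" using u(1) by blast
  qed auto
  moreover have "\<nexists>u. P - B = {u}" using True by (metis empty_not_insert)
  ultimately show ?thesis using True by blast
next
  case False
  have "part_set P \<subseteq> src_part (P - B) \<longleftrightarrow> P \<inter> B = {}"
    using part_set_split[of P] dec_disjoint_src_part[of "P \<inter> B" "P - B"] by blast
  moreover have "(\<exists>u. P = {u}) \<longleftrightarrow> (\<exists>u. P - B = {u}) \<and> P \<inter> B = {}"
  proof
    assume "\<exists>u. P = {u}"
    then show "(\<exists>u. P - B = {u}) \<and> P \<inter> B = {}" using False by auto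
  next
    assume "(\<exists>u. P - B = {u}) \<and> P \<inter> B = {}"
    then have "P - B = P" "\<exists>u. P - B = {u}" by auto
    then show "\<exists>u. P = {u}" by simp
  qed
  ultimately show ?thesis using False by simp
qed

end

section \<open>Transferring quantifier-free formulas into the glued part\<close>

text \<open>Meant for assignments sending all free variables into the glued part. Atoms
  without variables do not depend on the assignment; the oracle \<open>Or\<close> evaluates them.
  \<open>cs\<close> translates source constants of the whole into source constants of the part.\<close>

primrec qf_transfer :: "('a cmso \<Rightarrow> bool) \<Rightarrow> (nat \<Rightarrow> nat option) \<Rightarrow> 'a cmso \<Rightarrow> 'a cmso"
  and qf_transfer_s :: "('a cmso \<Rightarrow> bool) \<Rightarrow> (nat \<Rightarrow> nat option) \<Rightarrow> 'a sterm \<Rightarrow> 'a sterm"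
where
  "qf_transfer Or cs (Eq s t) =
     (case (s, t) of
        (FVar x, FVar y) \<Rightarrow> Eq s t
      | (Cst i, Cst j) \<Rightarrow> truth (Or (Eq s t))
      | _ \<Rightarrow> cfalse)"
| "qf_transfer Or cs (Lab a t) = (case t of FVar x \<Rightarrow> Lab a t | Cst j \<Rightarrow> cfalse)"
| "qf_transfer Or cs (Inc i s t) =
     (case (s, t) of
        (FVar x, FVar y) \<Rightarrow> Inc i s t
      | (FVar x, Cst j) \<Rightarrow> (case cs j of Some l \<Rightarrow> Inc i s (Cst l) | None \<Rightarrow> cfalse)
      | _ \<Rightarrow> cfalse)"
| "qf_transfer Or cs (Mem t S) =
     (case t of FVar x \<Rightarrow> Mem t (qf_transfer_s Or cs S) | Cst j \<Rightarrow> truth (Or (Mem t S)))"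
| "qf_transfer Or cs (CardMod S k m) = truth (Or (CardMod S k m))"
| "qf_transfer Or cs (Subset S T) = truth (Or (Subset S T))"
| "qf_transfer Or cs (Single S) = truth (Or (Single S))"
| "qf_transfer Or cs (Neg \<phi>) = Neg (qf_transfer Or cs \<phi>)"
| "qf_transfer Or cs (Conj \<phi> \<psi>) = Conj (qf_transfer Or cs \<phi>) (qf_transfer Or cs \<psi>)"
| "qf_transfer Or cs (cmso.Ex1 x \<phi>) = cfalse"
| "qf_transfer Or cs (Ex2 X \<phi>) = cfalse"
| "qf_transfer_s Or cs (SVar X) = SVar X"
| "qf_transfer_s Or cs (SConst \<psi>) = SConst (qf_transfer Or cs \<psi>)"

lemma qf_transfer_wf:
  assumes cs: "\<And>j l. cs j = Some l \<Longrightarrow> 1 \<le> l \<and> l \<le> n"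
  shows "ok Sig mx n' M \<phi> \<Longrightarrow>
      ok Sig mx n M (qf_transfer Or cs \<phi>) \<and> qrank (qf_transfer Or cs \<phi>) = 0 \<and>
      fv1 (qf_transfer Or cs \<phi>) \<subseteq> fv1 \<phi> \<and> fv2 (qf_transfer Or cs \<phi>) \<subseteq> fv2 \<phi>"
    and "ok_s Sig mx n' M S \<Longrightarrow>
      ok_s Sig mx n M (qf_transfer_s Or cs S) \<and> fv2_s (qf_transfer_s Or cs S) \<subseteq> fv2_s S"
proof (induction \<phi> and S rule: cmso.induct sterm.induct)
  case (Inc i s t)
  then show ?case using cs by (simp split: fterm.splits option.splits)
next
  case (Conj \<phi> \<psi>)
  then show ?case by auto
next
  case (SConst \<psi>)
  then show ?case by auto
qed (simp_all split: fterm.splits)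

lemma qf_transfer_cong:
  "ok Sig mx n M \<phi> \<Longrightarrow> fv2 \<phi> = {} \<Longrightarrow>
     (\<And>\<chi>. ok Sig mx n M \<chi> \<Longrightarrow> qrank \<chi> = 0 \<Longrightarrow> fv1 \<chi> = {} \<Longrightarrow> fv2 \<chi> = {} \<Longrightarrow>
       size \<chi> \<le> size \<phi> \<Longrightarrow> Or \<chi> = Or' \<chi>) \<Longrightarrow>
     qf_transfer Or cs \<phi> = qf_transfer Or' cs \<phi>"
  "ok_s Sig mx n M S \<Longrightarrow> fv2_s S = {} \<Longrightarrow>
     (\<And>\<chi>. ok Sig mx n M \<chi> \<Longrightarrow> qrank \<chi> = 0 \<Longrightarrow> fv1 \<chi> = {} \<Longrightarrow> fv2 \<chi> = {} \<Longrightarrow>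
       size \<chi> < size S \<Longrightarrow> Or \<chi> = Or' \<chi>) \<Longrightarrow>
     qf_transfer_s Or cs S = qf_transfer_s Or' cs S"
proof (induction \<phi> and S rule: cmso.induct sterm.induct)
  case (Eq s t)
  then show ?case by (cases s; cases t) auto
next
  case (Mem t S)
  then show ?case by (fastforce split: fterm.splits)
next
  case (Conj \<phi> \<psi>)
  then show ?case by fastforce
next
  case (SConst \<psi>)
  then show ?case by fastforce
qed (fastforce+)

context gluing
begin

text \<open>The source constant of \<open>G\<close> that names the same vertex as the source constant \<open>Cst j\<close>
  of \<open>D\<close>, if there is one.\<close>

definition const_index :: "nat \<Rightarrow> nat option" where
  "const_index j = map_of (zip E [1..<Suc (length E)]) (src D ! (j - 1))"

lemma const_index_range: "const_index j = Some l \<Longrightarrow> 1 \<le> l \<and> l \<le> length (src G)"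
proof -
  assume "const_index j = Some l"
  then have "(src D ! (j - 1), l) \<in> set (zip E [1..<Suc (length E)])"
    unfolding const_index_def by (rule map_of_SomeD)
  then have "l \<in> set [1..<Suc (length E)]" by (rule set_zip_rightD)
  then show ?thesis using length_E by (auto simp del: upt_Suc)
qed

lemma const_index_nth: "l < length E \<Longrightarrow> src D ! (j - 1) = E ! l \<Longrightarrow> const_index j = Some (Suc l)"
  using map_of_zip_nth[of E "[1..<Suc (length E)]" l] distinct_E
  by (simp add: const_index_def del: upt_Suc)

lemma corr_src_const:
  assumes "1 \<le> j" "j \<le> length (src D)"
  shows "corr (Inl (src D ! (j - 1))) g \<longleftrightarrow> (\<exists>l. const_index j = Some l \<and> g = Inl (src G ! (l - 1)))"
proof -
  let ?v = "src D ! (j - 1)"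
  have "corr (Inl ?v) g \<longleftrightarrow> (\<exists>l<length E. ?v = E ! l \<and> g = Inl (src G ! l))"
    using src_not_in_B[OF assms] by (auto simp: glue_corresp_def)
  also have "\<dots> \<longleftrightarrow> (\<exists>l. const_index j = Some l \<and> g = Inl (src G ! (l - 1)))"
  proof
    assume "\<exists>l<length E. ?v = E ! l \<and> g = Inl (src G ! l)"
    then show "\<exists>l. const_index j = Some l \<and> g = Inl (src G ! (l - 1))"
      using const_index_nth by fastforce
  next
    assume "\<exists>l. const_index j = Some l \<and> g = Inl (src G ! (l - 1))"
    then obtain l where l: "const_index j = Some l" "g = Inl (src G ! (l - 1))" by blast
    then have "?v \<in> set E" unfolding const_index_def by (metis length_upt map_of_zip_is_None
          option.distinct(1) diff_Suc_1)
    then obtain l' where "l' < length E" "?v = E ! l'" by (auto simp: in_set_conv_nth)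
    then show "\<exists>l<length E. ?v = E ! l \<and> g = Inl (src G ! l)"
      using l const_index_nth by fastforce
  qed
  finally show ?thesis .
qed

lemma lab_in_B:
  assumes "w \<in> B"
  shows "(\<exists>d\<in>edges D. w = Inr d \<and> lab D d = a) \<longleftrightarrow> (\<exists>f\<in>edges G. dec w = Inr f \<and> lab G f = a)"
proof (cases w)
  case (Inl v)
  then show ?thesis using isl_dec[OF assms] by auto
next
  case (Inr d)
  then obtain f where "dec (Inr d) = Inr f" "f \<in> edges G" "d \<in> edges D" "lab D d = lab G f"
    using inner_edgeE assms by metis
  then show ?thesis using Inr by auto
qed

lemma inc_in_B:
  assumes "w \<in> B"
  shows "(\<exists>d\<in>edges D. \<exists>v. w = Inr d \<and> b = Inl v \<and> 1 \<le> i \<and> i \<le> length (inc D d) \<and> inc D d ! (i - 1) = v)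
     \<longleftrightarrow> (\<exists>f\<in>edges G. dec w = Inr f \<and> 1 \<le> i \<and> i \<le> length (inc G f) \<and> corr b (Inl (inc G f ! (i - 1))))"
proof (cases w)
  case (Inl v)
  then show ?thesis using isl_dec[OF assms] by auto
next
  case (Inr d)
  then obtain f where f: "dec (Inr d) = Inr f" "f \<in> edges G" "d \<in> edges D"
    "length (inc D d) = length (inc G f)"
    "\<And>i w. i < length (inc G f) \<Longrightarrow> corr w (Inl (inc G f ! i)) \<longleftrightarrow> w = Inl (inc D d ! i)"
    using inner_edgeE assms by metis
  show ?thesis
    using f(1-4) f(5)[of "i - 1" b] Inr by (auto simp: Suc_le_eq)
qed

lemma sat_Inc_in_B:
  assumes "\<nu> x \<in> B" "\<nu>G x = dec (\<nu> x)" and "\<And>g. corr (tval D \<nu> t) g \<longleftrightarrow> g = tval G \<nu>G t'"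
  shows "sat D \<nu> \<sigma> (Inc i (FVar x) t) \<longleftrightarrow> sat G \<nu>G \<sigma>G (Inc i (FVar x) t')"
  using inc_in_B[OF assms(1), of "tval D \<nu> t" i] assms(2,3) by auto

lemma not_sat_Inc_in_B:
  assumes "\<nu> x \<in> B" "\<And>g. \<not> corr (tval D \<nu> t) g"
  shows "\<not> sat D \<nu> \<sigma> (Inc i (FVar x) t)"
  using inc_in_B[OF assms(1)] assms(2) by auto

lemma sat_Eq_transfer:
  assumes "ok Sig mx (length (src D)) M (Eq s t)"
    and "\<And>x. x \<in> fv1 (Eq s t) \<Longrightarrow> \<nu> x \<in> B \<and> \<nu>G x = dec (\<nu> x)"
  shows "sat D \<nu> \<sigma> (Eq s t) = sat G \<nu>G \<sigma>G (qf_transfer (models D) const_index (Eq s t))"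
proof (cases s; cases t)
  fix x y assume "s = FVar x" "t = FVar y"
  then show ?thesis using assms inj_dec by (auto simp: inj_on_def)
next
  fix x j assume "s = FVar x" "t = Cst j"
  then show ?thesis using assms src_not_in_B[of j] by auto
next
  fix i y assume "s = Cst i" "t = FVar y"
  then show ?thesis using assms src_not_in_B[of i] by force
next
  fix i j assume "s = Cst i" "t = Cst j"
  then show ?thesis by (simp add: models_def)
qed

lemma sat_Inc_transfer:
  assumes ok: "ok Sig mx (length (src D)) M (Inc i s t)"
    and fv: "\<And>x. x \<in> fv1 (Inc i s t) \<Longrightarrow> \<nu> x \<in> B \<and> \<nu>G x = dec (\<nu> x)"
  shows "sat D \<nu> \<sigma> (Inc i s t) = sat G \<nu>G \<sigma>G (qf_transfer (models D) const_index (Inc i s t))"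
proof (cases s)
  case (FVar x)
  then have x: "\<nu> x \<in> B" "\<nu>G x = dec (\<nu> x)" using fv by auto
  show ?thesis
  proof (cases t)
    case (FVar y)
    then have "corr (tval D \<nu> t) g \<longleftrightarrow> g = tval G \<nu>G t" for g
      using corr_B fv \<open>s = FVar x\<close> by auto
    from sat_Inc_in_B[of \<nu> x \<nu>G t t, OF x this] show ?thesis using \<open>s = FVar x\<close> FVar by simp
  next
    case (Cst j)
    then have "1 \<le> j" "j \<le> length (src D)" using ok by auto
    note corr_j = corr_src_const[OF this]
    show ?thesis
    proof (cases "const_index j")
      case None
      then have "\<not> corr (tval D \<nu> t) g" for g using corr_j Cst by simp
      from not_sat_Inc_in_B[of \<nu> x t, OF x(1) this] show ?thesis using \<open>s = FVar x\<close> Cst None by simp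
    next
      case (Some l)
      then have "corr (tval D \<nu> t) g \<longleftrightarrow> g = tval G \<nu>G (Cst l)" for g
        using corr_j Cst by auto
      from sat_Inc_in_B[of \<nu> x \<nu>G t "Cst l", OF x this]
      show ?thesis using \<open>s = FVar x\<close> Cst Some by simp
    qed
  qed
qed simp

lemma sat_qf_transfer:
  shows "ok Sig mx (length (src D)) M \<phi> \<Longrightarrow> qrank \<phi> = 0 \<Longrightarrow> fv2 \<phi> = {} \<Longrightarrow>
      (\<And>x. x \<in> fv1 \<phi> \<Longrightarrow> \<nu> x \<in> B \<and> \<nu>G x = dec (\<nu> x)) \<Longrightarrow>
      sat D \<nu> \<sigma> \<phi> = sat G \<nu>G \<sigma>G (qf_transfer (models D) const_index \<phi>)"
    and "ok_s Sig mx (length (src D)) M S \<Longrightarrow> fv2_s S = {} \<Longrightarrow> u \<in> B \<Longrightarrow>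
      u \<in> seval D \<nu> \<sigma> S \<longleftrightarrow> dec u \<in> seval G \<nu>G \<sigma>G (qf_transfer_s (models D) const_index S)"
proof (induction \<phi> and S arbitrary: \<nu> \<nu>G and \<nu> \<nu>G u rule: cmso.induct sterm.induct)
  case (Eq s t)
  then show ?case by (intro sat_Eq_transfer) auto
next
  case (Lab a t)
  then show ?case using lab_in_B by (cases t) auto
next
  case (Inc i s t)
  then show ?case by (intro sat_Inc_transfer) auto
next
  case (Mem t S)
  show ?case
  proof (cases t)
    case (FVar x)
    then show ?thesis using Mem by auto
  next
    case (Cst j)
    then show ?thesis using Mem.prems sat_closed[of Sig mx "length (src D)" M "Mem t S" D \<nu> \<sigma>] by simp
  qed
next
  case (CardMod S k m)
  then show ?case using sat_closed[of Sig mx "length (src D)" M "CardMod S k m" D \<nu> \<sigma>] by simp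
next
  case (Subset S T)
  then show ?case using sat_closed[of Sig mx "length (src D)" M "Subset S T" D \<nu> \<sigma>] by simp
next
  case (Single S)
  then show ?case using sat_closed[of Sig mx "length (src D)" M "Single S" D \<nu> \<sigma>] by simp
next
  case (Neg \<phi>)
  have "sat D \<nu> \<sigma> \<phi> = sat G \<nu>G \<sigma>G (qf_transfer (models D) const_index \<phi>)"
    by (rule Neg.IH) (use Neg.prems in auto)
  then show ?case by simp
next
  case (Conj \<phi> \<psi>)
  have "sat D \<nu> \<sigma> \<phi> = sat G \<nu>G \<sigma>G (qf_transfer (models D) const_index \<phi>)"
    "sat D \<nu> \<sigma> \<psi> = sat G \<nu>G \<sigma>G (qf_transfer (models D) const_index \<psi>)"
    by (rule Conj.IH; use Conj.prems in auto)+
  then show ?case by simp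
next
  case (SConst \<psi>)
  have "u \<in> univ D" "dec u \<in> univ G" using SConst.prems B_subset dec_in_univ by auto
  moreover have "sat D (\<nu>(0 := u)) \<sigma> \<psi> = sat G (\<nu>G(0 := dec u)) \<sigma>G (qf_transfer (models D) const_index \<psi>)"
    using SConst by (intro SConst.IH) auto
  ultimately show ?case by simp
qed simp_all

text \<open>A set constant \<open>[\<psi>]\<close> of the whole restricts to a set constant of the part: on internal
  elements it is the transferred \<open>\<psi>\<close>, on sources it is read off from \<open>P = [\<psi>]\<close> itself.\<close>

definition part_formula :: "'a cmso \<Rightarrow> (nat + nat) set \<Rightarrow> 'a cmso" where
  "part_formula \<psi> P =
     Disj (Conj (not_source 0 (length (src G))) (qf_transfer (models D) const_index \<psi>))
          (is_source_in 0 [l \<leftarrow> [0..<length E]. Inl (E ! l) \<in> P])"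

lemma part_formula_wf:
  assumes "ok_s Sig mx (length (src D)) M (SConst \<psi>)"
  shows "ok_s Sig mx (length (src G)) M (SConst (part_formula \<psi> P))"
proof -
  have "ok Sig mx (length (src G)) M (qf_transfer (models D) const_index \<psi>) \<and>
      qrank (qf_transfer (models D) const_index \<psi>) = 0 \<and>
      fv1 (qf_transfer (models D) const_index \<psi>) \<subseteq> fv1 \<psi> \<and>
      fv2 (qf_transfer (models D) const_index \<psi>) \<subseteq> fv2 \<psi>"
    using assms const_index_range by (intro qf_transfer_wf(1)) auto
  then show ?thesis
    using assms is_source_in_simps(1)[of 0] not_source_simps(1)[of 0] length_E
    by (auto simp: part_formula_def)
qed

lemma part_set_set_const:
  fixes \<nu> :: "nat \<Rightarrow> nat + nat" and \<sigma> :: "nat \<Rightarrow> (nat + nat) set"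
  assumes "ok_s Sig mx (length (src D)) M (SConst \<psi>)"
  defines "P \<equiv> seval D \<nu> \<sigma> (SConst \<psi>)"
  shows "part_set P = seval G (part_asg \<nu>) \<sigma>G (SConst (part_formula \<psi> P))"
proof -
  let ?L = "[l \<leftarrow> [0..<length E]. Inl (E ! l) \<in> P]"
  let ?Q = "\<lambda>g. sat G ((part_asg \<nu>)(0 := g)) \<sigma>G (part_formula \<psi> P)"
  have "part_set P = {g \<in> univ G. ?Q g}"
  proof (rule part_set_eqI)
    fix u assume u: "u \<in> B"
    have "sat D (\<nu>(0 := u)) \<sigma> \<psi> =
        sat G ((part_asg \<nu>)(0 := dec u)) \<sigma>G (qf_transfer (models D) const_index \<psi>)"
      using assms(1) u by (intro sat_qf_transfer(1)) auto
    moreover have "dec u \<notin> Inl ` set (src G)" using dec_internal u by (auto simp: internal_def)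
    ultimately show "u \<in> P \<longleftrightarrow> ?Q (dec u)"
      using u B_subset src_nth_in_set by (auto simp: P_def part_formula_def)
  next
    fix l assume l: "l < length E"
    have "(\<exists>l'\<in>set ?L. src G ! l = src G ! l') \<longleftrightarrow> Inl (E ! l) \<in> P"
      using l distinct_src length_E by (auto simp: nth_eq_iff_index_eq)
    then show "Inl (E ! l) \<in> P \<longleftrightarrow> ?Q (Inl (src G ! l))"
      using l src_nth_in_set by (auto simp: part_formula_def)
  qed
  then show ?thesis by simp
qed

end

section \<open>Two gluings that agree outside the glued parts\<close>

definition same_outside :: "'a hg \<Rightarrow> (nat + nat) set \<Rightarrow> 'a hg \<Rightarrow> (nat + nat) set \<Rightarrow> bool" where
  "same_outside D B D' B' \<longleftrightarrow> univ D - B = univ D' - B' \<and> src D = src D' \<and>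
     (\<forall>d. Inr d \<in> univ D - B \<longrightarrow> lab D d = lab D' d \<and> inc D d = inc D' d)"

lemma same_outside_sym: "same_outside D B D' B' \<Longrightarrow> same_outside D' B' D B"
  unfolding same_outside_def by metis

locale gluing_pair = L: gluing D G B dec E + R: gluing D' G' B' dec' E
  for D G :: "'a hg" and B dec and D' G' :: "'a hg" and B' dec' E +
  fixes Sig :: "'a set" and mx :: nat and M :: "nat set"
  assumes same_outside: "same_outside D B D' B'"

context gluing_pair
begin

lemma univ_outside: "univ D - B = univ D' - B'"
  and src_eq: "src D' = src D"
  and outer_edge_eq: "Inr d \<in> univ D - B \<Longrightarrow> lab D' d = lab D d \<and> inc D' d = inc D d"
  using same_outside by (auto simp: same_outside_def)

lemma length_src_parts: "length (src G') = length (src G)"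
  using L.length_E R.length_E by simp

text \<open>Positions of the back-and-forth argument.\<close>

definition agree ::
  "nat \<Rightarrow> nat set \<Rightarrow> (nat \<Rightarrow> nat + nat) \<Rightarrow> (nat \<Rightarrow> (nat + nat) set) \<Rightarrow>
   (nat \<Rightarrow> nat + nat) \<Rightarrow> (nat \<Rightarrow> (nat + nat) set) \<Rightarrow> bool"
where
  "agree k W \<nu> \<sigma> \<nu>' \<sigma>' \<longleftrightarrow>
     (\<forall>x. \<nu> x \<notin> B \<longrightarrow> \<nu>' x = \<nu> x) \<and> (\<forall>x. \<nu> x \<in> B \<longleftrightarrow> \<nu>' x \<in> B') \<and>
     (\<forall>X. \<sigma> X - B = \<sigma>' X - B') \<and>
     (\<forall>\<phi>. ok Sig mx (length (src G)) M \<phi> \<longrightarrow> qrank \<phi> \<le> k \<longrightarrow> fv1 \<phi> \<subseteq> {x. \<nu> x \<in> B} \<longrightarrow>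
        fv2 \<phi> \<subseteq> W \<longrightarrow>
        sat G (L.part_asg \<nu>) (L.part_set \<circ> \<sigma>) \<phi> = sat G' (R.part_asg \<nu>') (R.part_set \<circ> \<sigma>') \<phi>)"

lemma agreeD:
  assumes "agree k W \<nu> \<sigma> \<nu>' \<sigma>'"
  shows agree_outside: "\<nu> x \<notin> B \<Longrightarrow> \<nu>' x = \<nu> x"
    and agree_in_B: "\<nu>' x \<in> B' \<longleftrightarrow> \<nu> x \<in> B"
    and agree_sets: "\<sigma>' X - B' = \<sigma> X - B"
    and agree_sat: "ok Sig mx (length (src G)) M \<phi> \<Longrightarrow> qrank \<phi> \<le> k \<Longrightarrow>
      fv1 \<phi> \<subseteq> {x. \<nu> x \<in> B} \<Longrightarrow> fv2 \<phi> \<subseteq> W \<Longrightarrow>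
      sat G (L.part_asg \<nu>) (L.part_set \<circ> \<sigma>) \<phi> = sat G' (R.part_asg \<nu>') (R.part_set \<circ> \<sigma>') \<phi>"
  using assms by (auto simp: agree_def)

lemma gluing_pair_swap: "gluing_pair D' G' B' dec' D G B dec E"
  using same_outside by unfold_locales (rule same_outside_sym)

lemma agreeI:
  assumes "\<And>x. \<nu> x \<notin> B \<Longrightarrow> \<nu>' x = \<nu> x" "\<And>x. \<nu>' x \<in> B' \<longleftrightarrow> \<nu> x \<in> B" "\<And>X. \<sigma>' X - B' = \<sigma> X - B"
    and "\<And>\<phi>. ok Sig mx (length (src G)) M \<phi> \<Longrightarrow> qrank \<phi> \<le> k \<Longrightarrow> fv1 \<phi> \<subseteq> {x. \<nu> x \<in> B} \<Longrightarrow>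
      fv2 \<phi> \<subseteq> W \<Longrightarrow>
      sat G (L.part_asg \<nu>) (L.part_set \<circ> \<sigma>) \<phi> = sat G' (R.part_asg \<nu>') (R.part_set \<circ> \<sigma>') \<phi>"
  shows "agree k W \<nu> \<sigma> \<nu>' \<sigma>'"
  using assms unfolding agree_def by metis

lemma agree_mono: "agree k W \<nu> \<sigma> \<nu>' \<sigma>' \<Longrightarrow> k' \<le> k \<Longrightarrow> agree k' W \<nu> \<sigma> \<nu>' \<sigma>'"
  unfolding agree_def by (meson le_trans)

lemma agree_upd_outside:
  assumes agr: "agree k W \<nu> \<sigma> \<nu>' \<sigma>'" and u: "u \<notin> B" "u \<notin> B'"
  shows "agree k W (\<nu>(x := u)) \<sigma> (\<nu>'(x := u)) \<sigma>'"
  unfolding agree_def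
proof (intro conjI allI impI)
  fix \<phi> assume \<phi>: "ok Sig mx (length (src G)) M \<phi>" "qrank \<phi> \<le> k"
    "fv1 \<phi> \<subseteq> {y. (\<nu>(x := u)) y \<in> B}" "fv2 \<phi> \<subseteq> W"
  then have fv: "fv1 \<phi> \<subseteq> {y. \<nu> y \<in> B}" "x \<notin> fv1 \<phi>" using u by (auto split: if_splits)
  have "sat G (L.part_asg (\<nu>(x := u))) (L.part_set \<circ> \<sigma>) \<phi> = sat G (L.part_asg \<nu>) (L.part_set \<circ> \<sigma>) \<phi>"
    using fv(2) u(1) L.part_asg_upd_outside by (intro sat_coincidence(1)[OF \<phi>(1)]) metis+
  also have "\<dots> = sat G' (R.part_asg \<nu>') (R.part_set \<circ> \<sigma>') \<phi>"
    using agree_sat[OF agr] \<phi> fv by blast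
  also have "\<dots> = sat G' (R.part_asg (\<nu>'(x := u))) (R.part_set \<circ> \<sigma>') \<phi>"
    using fv(2) u(2) R.part_asg_upd_outside by (intro sat_coincidence(1)[OF \<phi>(1)]) metis+
  finally show "sat G (L.part_asg (\<nu>(x := u))) (L.part_set \<circ> \<sigma>) \<phi> =
      sat G' (R.part_asg (\<nu>'(x := u))) (R.part_set \<circ> \<sigma>') \<phi>" .
qed (use agreeD[OF agr] u in auto)

lemma agree_forth_part_elem:
  assumes agr: "agree (Suc k) W \<nu> \<sigma> \<nu>' \<sigma>'" and u: "u \<in> B"
  shows "\<exists>g'\<in>internal G'. \<forall>\<phi>. ok Sig mx (length (src G)) M \<phi> \<longrightarrow> qrank \<phi> \<le> k \<longrightarrow>
    fv1 \<phi> \<subseteq> insert x {y. \<nu> y \<in> B} \<longrightarrow> fv2 \<phi> \<subseteq> W \<longrightarrow>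
    sat G ((L.part_asg \<nu>)(x := dec u)) (L.part_set \<circ> \<sigma>) \<phi> =
      sat G' ((R.part_asg \<nu>')(x := g')) (R.part_set \<circ> \<sigma>') \<phi>"
proof -
  let ?n = "length (src G)"
  let ?\<nu>G = "L.part_asg \<nu>" and ?\<sigma>G = "L.part_set \<circ> \<sigma>"
  let ?\<nu>G' = "R.part_asg \<nu>'" and ?\<sigma>G' = "R.part_set \<circ> \<sigma>'"
  define P where "P \<phi> \<longleftrightarrow> ok Sig mx ?n M \<phi> \<and> qrank \<phi> \<le> k \<and> fv1 \<phi> \<subseteq> insert x {y. \<nu> y \<in> B} \<and>
    fv2 \<phi> \<subseteq> W" for \<phi>
  have "\<exists>g'\<in>internal G'. \<forall>\<phi>. P \<phi> \<longrightarrow>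
      sat G (?\<nu>G(x := dec u)) ?\<sigma>G \<phi> = sat G' (?\<nu>G'(x := g')) ?\<sigma>G' \<phi>"
  proof (rule ccontr)
    assume "\<not> ?thesis"
    then have separated: "\<exists>\<phi>. P \<phi> \<and> sat G (?\<nu>G(x := dec u)) ?\<sigma>G \<phi> \<and> \<not> sat G' (?\<nu>G'(x := g')) ?\<sigma>G' \<phi>"
      if "g' \<in> internal G'" for g'
      using that sat_distinguishing[of P] by (fastforce simp: P_def)
    have "finite (internal G')" using R.finite_part by (simp add: internal_def)
    then obtain \<Phi> where \<Phi>: "\<forall>\<phi>\<in>set \<Phi>. P \<phi>" "sat G (?\<nu>G(x := dec u)) ?\<sigma>G (conj_list \<Phi>)"
      "\<And>g'. g' \<in> internal G' \<Longrightarrow> \<not> sat G' (?\<nu>G'(x := g')) ?\<sigma>G' (conj_list \<Phi>)"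
      using distinguishing_conj[of "internal G'" P G "?\<nu>G(x := dec u)" ?\<sigma>G G' "\<lambda>g'. ?\<nu>G'(x := g')"
          "\<lambda>_. ?\<sigma>G'"] separated by blast
    define \<Psi> where "\<Psi> = cmso.Ex1 x (Conj (not_source x ?n) (conj_list \<Phi>))"
    have wf: "ok Sig mx ?n M \<Psi>" "qrank \<Psi> \<le> Suc k" "fv1 \<Psi> \<subseteq> {y. \<nu> y \<in> B}" "fv2 \<Psi> \<subseteq> W"
      using \<Phi>(1) by (auto simp: \<Psi>_def P_def dest: subsetD[OF not_source_simps(1)])
    have "dec u \<in> univ G" "dec u \<notin> Inl ` set (src G)"
      using u L.dec_internal by (auto simp: internal_def)
    then have "sat G ?\<nu>G ?\<sigma>G \<Psi>" using \<Phi>(2) by (auto simp: \<Psi>_def intro!: bexI[of _ "dec u"])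
    then have "sat G' ?\<nu>G' ?\<sigma>G' \<Psi>" using agree_sat[OF agr wf] by simp
    then obtain g' where "g' \<in> internal G'" "sat G' (?\<nu>G'(x := g')) ?\<sigma>G' (conj_list \<Phi>)"
      using length_src_parts by (auto simp: \<Psi>_def internal_def)
    then show False using \<Phi>(3) by blast
  qed
  then show ?thesis unfolding P_def by blast
qed

lemma agree_forth_elem:
  assumes agr: "agree (Suc k) W \<nu> \<sigma> \<nu>' \<sigma>'" and u: "u \<in> B"
  shows "\<exists>u'\<in>B'. agree k W (\<nu>(x := u)) \<sigma> (\<nu>'(x := u')) \<sigma>'"
proof -
  obtain g' where g': "g' \<in> internal G'"
    and same: "\<forall>\<phi>. ok Sig mx (length (src G)) M \<phi> \<longrightarrow> qrank \<phi> \<le> k \<longrightarrow>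
      fv1 \<phi> \<subseteq> insert x {y. \<nu> y \<in> B} \<longrightarrow> fv2 \<phi> \<subseteq> W \<longrightarrow>
      sat G ((L.part_asg \<nu>)(x := dec u)) (L.part_set \<circ> \<sigma>) \<phi> =
        sat G' ((R.part_asg \<nu>')(x := g')) (R.part_set \<circ> \<sigma>') \<phi>"
    using agree_forth_part_elem[OF agr u, where x = x] by blast
  obtain u' where u': "u' \<in> B'" "g' = dec' u'" using g' R.dec_image by (metis imageE)
  have "agree k W (\<nu>(x := u)) \<sigma> (\<nu>'(x := u')) \<sigma>'"
  proof (rule agreeI)
    fix \<phi> assume "ok Sig mx (length (src G)) M \<phi>" "qrank \<phi> \<le> k"
      "fv1 \<phi> \<subseteq> {y. (\<nu>(x := u)) y \<in> B}" "fv2 \<phi> \<subseteq> W"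
    then show "sat G (L.part_asg (\<nu>(x := u))) (L.part_set \<circ> \<sigma>) \<phi> =
        sat G' (R.part_asg (\<nu>'(x := u'))) (R.part_set \<circ> \<sigma>') \<phi>"
      using same L.part_asg_upd[OF u] R.part_asg_upd[OF u'(1)] u'(2) by (auto split: if_splits)
  qed (use agreeD[OF agr] u u'(1) in auto)
  then show ?thesis using u'(1) by blast
qed

text \<open>The candidates for \<open>U\<close> are the subsets of \<open>G'\<close> containing the same sources as \<open>U\<close>.\<close>

lemma agree_forth_part_set:
  assumes agr: "agree (Suc k) W \<nu> \<sigma> \<nu>' \<sigma>'"
  shows "\<exists>Y\<subseteq>univ G'. (\<forall>l<length E. Inl (src G' ! l) \<in> Y \<longleftrightarrow> Inl (E ! l) \<in> U) \<and>
    (\<forall>\<phi>. ok Sig mx (length (src G)) M \<phi> \<longrightarrow> qrank \<phi> \<le> k \<longrightarrow> fv1 \<phi> \<subseteq> {y. \<nu> y \<in> B} \<longrightarrow>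
      fv2 \<phi> \<subseteq> insert X W \<longrightarrow> sat G (L.part_asg \<nu>) ((L.part_set \<circ> \<sigma>)(X := L.part_set U)) \<phi> =
        sat G' (R.part_asg \<nu>') ((R.part_set \<circ> \<sigma>')(X := Y)) \<phi>)"
proof -
  let ?n = "length (src G)" and ?S = "{l. Inl (E ! l) \<in> U}"
  let ?\<nu>G = "L.part_asg \<nu>" and ?\<sigma>G = "L.part_set \<circ> \<sigma>"
  let ?\<nu>G' = "R.part_asg \<nu>'" and ?\<sigma>G' = "R.part_set \<circ> \<sigma>'"
  let ?\<sigma>U = "?\<sigma>G(X := L.part_set U)"
  define P where "P \<phi> \<longleftrightarrow> ok Sig mx ?n M \<phi> \<and> qrank \<phi> \<le> k \<and> fv1 \<phi> \<subseteq> {y. \<nu> y \<in> B} \<and>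
    fv2 \<phi> \<subseteq> insert X W" for \<phi>
  define C where "C = {Y. Y \<subseteq> univ G' \<and> (\<forall>l<?n. Inl (src G' ! l) \<in> Y \<longleftrightarrow> l \<in> ?S)}"
  have "\<exists>Y\<in>C. \<forall>\<phi>. P \<phi> \<longrightarrow> sat G ?\<nu>G ?\<sigma>U \<phi> = sat G' ?\<nu>G' (?\<sigma>G'(X := Y)) \<phi>"
  proof (rule ccontr)
    assume "\<not> ?thesis"
    then have separated: "\<exists>\<phi>. P \<phi> \<and> sat G ?\<nu>G ?\<sigma>U \<phi> \<and> \<not> sat G' ?\<nu>G' (?\<sigma>G'(X := Y)) \<phi>"
      if "Y \<in> C" for Y
      using that sat_distinguishing[of P] by (fastforce simp: P_def)
    have "finite C" using R.finite_part by (auto simp: C_def intro: finite_subset[of _ "Pow (univ G')"])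
    then obtain \<Phi> where \<Phi>: "\<forall>\<phi>\<in>set \<Phi>. P \<phi>" "sat G ?\<nu>G ?\<sigma>U (conj_list \<Phi>)"
      "\<And>Y. Y \<in> C \<Longrightarrow> \<not> sat G' ?\<nu>G' (?\<sigma>G'(X := Y)) (conj_list \<Phi>)"
      using distinguishing_conj[of C P G ?\<nu>G ?\<sigma>U G' "\<lambda>_. ?\<nu>G'" "\<lambda>Y. ?\<sigma>G'(X := Y)"] separated
      by blast
    define \<Psi> where "\<Psi> = Ex2 X (Conj (source_trace X ?S ?n) (conj_list \<Phi>))"
    have wf: "ok Sig mx ?n M \<Psi>" "qrank \<Psi> \<le> Suc k" "fv1 \<Psi> \<subseteq> {y. \<nu> y \<in> B}" "fv2 \<Psi> \<subseteq> W"
      using \<Phi>(1) by (auto simp: \<Psi>_def P_def dest: subsetD[OF source_trace_simps(2)])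
    have "sat G ?\<nu>G ?\<sigma>U (source_trace X ?S ?n)"
      using L.src_in_part_set L.length_E by simp
    then have "sat G ?\<nu>G ?\<sigma>G \<Psi>"
      using \<Phi>(2) L.part_set_subset by (auto simp: \<Psi>_def intro!: exI[of _ "L.part_set U"])
    then have "sat G' ?\<nu>G' ?\<sigma>G' \<Psi>" using agree_sat[OF agr wf] by simp
    then obtain Y where "Y \<in> C" "sat G' ?\<nu>G' (?\<sigma>G'(X := Y)) (conj_list \<Phi>)"
      using length_src_parts by (auto simp: \<Psi>_def C_def)
    then show False using \<Phi>(3) by blast
  qed
  then obtain Y where Y: "Y \<subseteq> univ G'" "\<forall>l<?n. Inl (src G' ! l) \<in> Y \<longleftrightarrow> l \<in> ?S"
    and same: "\<forall>\<phi>. P \<phi> \<longrightarrow> sat G ?\<nu>G ?\<sigma>U \<phi> = sat G' ?\<nu>G' (?\<sigma>G'(X := Y)) \<phi>"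
    unfolding C_def by blast
  moreover have "\<forall>l<length E. Inl (src G' ! l) \<in> Y \<longleftrightarrow> Inl (E ! l) \<in> U" using Y(2) L.length_E by simp
  ultimately show ?thesis by (intro exI[of _ Y] conjI allI impI) (auto simp: P_def)
qed

lemma agree_forth_set:
  assumes agr: "agree (Suc k) W \<nu> \<sigma> \<nu>' \<sigma>'" and U: "U \<subseteq> univ D"
  shows "\<exists>U'\<subseteq>univ D'. agree k (insert X W) \<nu> (\<sigma>(X := U)) \<nu>' (\<sigma>'(X := U'))"
proof -
  obtain Y where Y: "Y \<subseteq> univ G'" "\<forall>l<length E. Inl (src G' ! l) \<in> Y \<longleftrightarrow> Inl (E ! l) \<in> U"
    and same: "\<forall>\<phi>. ok Sig mx (length (src G)) M \<phi> \<longrightarrow> qrank \<phi> \<le> k \<longrightarrow> fv1 \<phi> \<subseteq> {y. \<nu> y \<in> B} \<longrightarrow>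
      fv2 \<phi> \<subseteq> insert X W \<longrightarrow> sat G (L.part_asg \<nu>) ((L.part_set \<circ> \<sigma>)(X := L.part_set U)) \<phi> =
        sat G' (R.part_asg \<nu>') ((R.part_set \<circ> \<sigma>')(X := Y)) \<phi>"
    using agree_forth_part_set[OF agr, where U = U and X = X] by blast
  define U' where "U' = U - B \<union> {b \<in> B'. dec' b \<in> Y}"
  have "U - B \<subseteq> univ D' - B'" using U univ_outside by blast
  then have U': "U' \<subseteq> univ D'" "U' - B' = U - B" and UB: "U - B - B' = U - B"
    using R.B_subset by (auto simp: U'_def)
  have "R.part_set (U - B - B' \<union> {b \<in> B'. dec' b \<in> Y}) = Y"
    using Y L.E_not_in_B by (intro R.part_set_realize) auto
  then have "R.part_set U' = Y" unfolding U'_def UB .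
  then have "agree k (insert X W) \<nu> (\<sigma>(X := U)) \<nu>' (\<sigma>'(X := U'))"
    using agreeD[OF agr] U' same by (intro agreeI) (auto simp: fun_upd_comp)
  then show ?thesis using U' by blast
qed

lemma agree_sat_qf:
  assumes "agree k W \<nu> \<sigma> \<nu>' \<sigma>'" "ok Sig mx (length (src G)) M \<phi>" "qrank \<phi> = 0"
    "fv1 \<phi> \<subseteq> {x. \<nu> x \<in> B}" "fv2 \<phi> = {}"
  shows "sat G (L.part_asg \<nu>) (L.part_set \<circ> \<sigma>) \<phi> = sat G' (R.part_asg \<nu>') (R.part_set \<circ> \<sigma>') \<phi>"
  using assms by (intro agree_sat) auto

lemma edge_outside:
  assumes "Inr d \<notin> B" "Inr d \<notin> B'"
  shows "d \<in> edges D' \<longleftrightarrow> d \<in> edges D"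
    and "d \<in> edges D \<Longrightarrow> lab D' d = lab D d \<and> inc D' d = inc D d"
proof -
  have "Inr d \<in> univ D - B \<longleftrightarrow> Inr d \<in> univ D' - B'" using univ_outside by simp
  then show "d \<in> edges D' \<longleftrightarrow> d \<in> edges D" using assms by (auto simp: univ_def)
  show "d \<in> edges D \<Longrightarrow> lab D' d = lab D d \<and> inc D' d = inc D d"
    using outer_edge_eq assms(1) by (simp add: univ_def)
qed

definition set_match ::
  "nat set \<Rightarrow> (nat \<Rightarrow> nat + nat) \<Rightarrow> (nat \<Rightarrow> (nat + nat) set) \<Rightarrow> (nat \<Rightarrow> nat + nat) \<Rightarrow>
   (nat \<Rightarrow> (nat + nat) set) \<Rightarrow> (nat + nat) set \<Rightarrow> (nat + nat) set \<Rightarrow> 'a sterm \<Rightarrow> bool"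
where
  "set_match W \<nu> \<sigma> \<nu>' \<sigma>' P P' S \<longleftrightarrow>
     P' - B' = P - B \<and> ok_s Sig mx (length (src G)) M S \<and> fv2_s S \<subseteq> W \<and>
     L.part_set P = seval G (L.part_asg \<nu>) (L.part_set \<circ> \<sigma>) S \<and>
     R.part_set P' = seval G' (R.part_asg \<nu>') (R.part_set \<circ> \<sigma>') S"

context
  fixes k W \<nu> \<sigma> \<nu>' \<sigma>'
  assumes agr: "agree k W \<nu> \<sigma> \<nu>' \<sigma>'"
begin

lemma tval_agree:
  assumes t: "ok_t (length (src D)) t"
  shows tval_outside: "tval D \<nu> t \<notin> B \<Longrightarrow> tval D' \<nu>' t = tval D \<nu> t"
    and tval_in_B_iff: "tval D' \<nu>' t \<in> B' \<longleftrightarrow> tval D \<nu> t \<in> B"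
    and tval_in_B: "tval D \<nu> t \<in> B \<Longrightarrow> \<exists>x. t = FVar x \<and> \<nu> x \<in> B"
    and tval_outside_B': "tval D \<nu> t \<notin> B \<Longrightarrow> tval D \<nu> t \<notin> B'"
proof -
  show "tval D \<nu> t \<notin> B \<Longrightarrow> tval D' \<nu>' t = tval D \<nu> t"
    using agree_outside[OF agr] src_eq by (cases t) auto
  show "tval D' \<nu>' t \<in> B' \<longleftrightarrow> tval D \<nu> t \<in> B"
    using agree_in_B[OF agr] t L.src_not_in_B R.src_not_in_B src_eq by (cases t) auto
  show "tval D \<nu> t \<in> B \<Longrightarrow> \<exists>x. t = FVar x \<and> \<nu> x \<in> B"
    using t L.src_not_in_B by (cases t) auto
  then show "tval D \<nu> t \<notin> B \<Longrightarrow> tval D \<nu> t \<notin> B'"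
    using \<open>tval D \<nu> t \<notin> B \<Longrightarrow> tval D' \<nu>' t = tval D \<nu> t\<close> \<open>tval D' \<nu>' t \<in> B' \<longleftrightarrow> tval D \<nu> t \<in> B\<close>
    by metis
qed

lemma sat_Eq_agree:
  assumes ok: "ok Sig mx (length (src D)) M (Eq s t)"
  shows "sat D' \<nu>' \<sigma>' (Eq s t) \<longleftrightarrow> sat D \<nu> \<sigma> (Eq s t)"
proof (cases "tval D \<nu> s \<in> B \<and> tval D \<nu> t \<in> B")
  case True
  then obtain x y where xy: "s = FVar x" "t = FVar y" "\<nu> x \<in> B" "\<nu> y \<in> B"
    using tval_in_B ok by (metis ok.simps(1))
  then have xy': "\<nu>' x \<in> B'" "\<nu>' y \<in> B'" using agree_in_B[OF agr] by auto
  have "sat G (L.part_asg \<nu>) (L.part_set \<circ> \<sigma>) (Eq s t) = sat G' (R.part_asg \<nu>') (R.part_set \<circ> \<sigma>') (Eq s t)"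
    using xy by (intro agree_sat_qf[OF agr]) auto
  moreover have "sat G (L.part_asg \<nu>) (L.part_set \<circ> \<sigma>) (Eq s t) \<longleftrightarrow> \<nu> x = \<nu> y"
    using xy L.inj_dec by (auto simp: L.part_asg_def inj_on_def)
  moreover have "sat G' (R.part_asg \<nu>') (R.part_set \<circ> \<sigma>') (Eq s t) \<longleftrightarrow> \<nu>' x = \<nu>' y"
    using xy xy' R.inj_dec by (auto simp: R.part_asg_def inj_on_def)
  ultimately show ?thesis using xy by simp
next
  case False
  then show ?thesis
    using ok tval_outside[of s] tval_outside[of t] tval_in_B_iff[of s] tval_in_B_iff[of t]
    by (simp, metis)
qed

lemma sat_Lab_agree:
  assumes ok: "ok Sig mx (length (src D)) M (Lab a t)"
  shows "sat D' \<nu>' \<sigma>' (Lab a t) \<longleftrightarrow> sat D \<nu> \<sigma> (Lab a t)"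
proof (cases "tval D \<nu> t \<in> B")
  case True
  then obtain x where x: "t = FVar x" "\<nu> x \<in> B" using tval_in_B ok by auto
  then have x': "\<nu>' x \<in> B'" using agree_in_B[OF agr] by auto
  have "sat G (L.part_asg \<nu>) (L.part_set \<circ> \<sigma>) (Lab a t) = sat G' (R.part_asg \<nu>') (R.part_set \<circ> \<sigma>') (Lab a t)"
    using x ok by (intro agree_sat_qf[OF agr]) auto
  then show ?thesis
    using x x' L.lab_in_B[OF x(2)] R.lab_in_B[OF x'] by (simp add: L.part_asg_def R.part_asg_def)
next
  case False
  then have "tval D' \<nu>' t = tval D \<nu> t" "tval D \<nu> t \<notin> B'" using ok tval_outside tval_outside_B' by auto
  then show ?thesis using False edge_outside by (cases "tval D \<nu> t") auto
qed

lemma sat_Inc_agree_via: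
  assumes x: "\<nu> x \<in> B" and ok: "ok Sig mx (length (src G)) M (Inc i (FVar x) t')"
    and fv: "fv1_t t' \<subseteq> {y. \<nu> y \<in> B}"
    and L_corr: "\<And>g. L.corr (tval D \<nu> t) g \<longleftrightarrow> g = tval G (L.part_asg \<nu>) t'"
    and R_corr: "\<And>g. R.corr (tval D' \<nu>' t) g \<longleftrightarrow> g = tval G' (R.part_asg \<nu>') t'"
  shows "sat D' \<nu>' \<sigma>' (Inc i (FVar x) t) \<longleftrightarrow> sat D \<nu> \<sigma> (Inc i (FVar x) t)"
proof -
  have x': "\<nu>' x \<in> B'" using x agree_in_B[OF agr] by auto
  have "L.part_asg \<nu> x = dec (\<nu> x)" "R.part_asg \<nu>' x = dec' (\<nu>' x)"
    using x x' by (simp_all add: L.part_asg_def R.part_asg_def)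
  then have "sat D \<nu> \<sigma> (Inc i (FVar x) t) = sat G (L.part_asg \<nu>) (L.part_set \<circ> \<sigma>) (Inc i (FVar x) t')"
    "sat D' \<nu>' \<sigma>' (Inc i (FVar x) t) = sat G' (R.part_asg \<nu>') (R.part_set \<circ> \<sigma>') (Inc i (FVar x) t')"
    using L.sat_Inc_in_B[of \<nu> x, OF x _ L_corr] R.sat_Inc_in_B[of \<nu>' x, OF x' _ R_corr] by simp_all
  moreover have "sat G (L.part_asg \<nu>) (L.part_set \<circ> \<sigma>) (Inc i (FVar x) t') =
      sat G' (R.part_asg \<nu>') (R.part_set \<circ> \<sigma>') (Inc i (FVar x) t')"
    using x ok fv by (intro agree_sat_qf[OF agr]) auto
  ultimately show ?thesis by simp
qed

lemma sat_Inc_agree_in_B: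
  assumes x: "\<nu> x \<in> B" and ok: "ok Sig mx (length (src D)) M (Inc i (FVar x) t)"
  shows "sat D' \<nu>' \<sigma>' (Inc i (FVar x) t) \<longleftrightarrow> sat D \<nu> \<sigma> (Inc i (FVar x) t)"
proof (cases "tval D \<nu> t \<in> B")
  case True
  then obtain y where y: "t = FVar y" "\<nu> y \<in> B" using tval_in_B ok by auto
  then have "\<nu>' y \<in> B'" using agree_in_B[OF agr] by auto
  then show ?thesis using x y ok L.corr_B R.corr_B
    by (intro sat_Inc_agree_via[of x i t]) (auto simp: L.part_asg_def R.part_asg_def)
next
  case False
  then have b: "tval D' \<nu>' t = tval D \<nu> t" "tval D \<nu> t \<notin> B'"
    using ok tval_outside tval_outside_B' by auto
  show ?thesis
  proof (cases "\<exists>l<length E. tval D \<nu> t = Inl (E ! l)")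
    case True
    then obtain l where "l < length E" "tval D \<nu> t = Inl (E ! l)" by blast
    then show ?thesis
      using x b ok L.corr_E R.corr_E L.length_E by (intro sat_Inc_agree_via[of x i "Cst (Suc l)"]) auto
  next
    case False
    then have "\<not> L.corr (tval D \<nu> t) g" "\<not> R.corr (tval D' \<nu>' t) g" for g
      using b \<open>tval D \<nu> t \<notin> B\<close> L.corr_outside_B R.corr_outside_B by metis+
    then show ?thesis
      using L.not_sat_Inc_in_B[of \<nu> x t] R.not_sat_Inc_in_B[of \<nu>' x t] x agree_in_B[OF agr] by blast
  qed
qed

lemma sat_Inc_agree_outside:
  assumes s: "tval D \<nu> s \<notin> B" and ok: "ok Sig mx (length (src D)) M (Inc i s t)"
  shows "sat D' \<nu>' \<sigma>' (Inc i s t) \<longleftrightarrow> sat D \<nu> \<sigma> (Inc i s t)"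
proof -
  have s': "tval D' \<nu>' s = tval D \<nu> s" "tval D \<nu> s \<notin> B'"
    using s ok tval_outside tval_outside_B' by auto
  show ?thesis
  proof (cases "tval D \<nu> s")
    case (Inl v)
    then show ?thesis using s' by simp
  next
    case (Inr d)
    then have d: "d \<in> edges D' \<longleftrightarrow> d \<in> edges D" "d \<in> edges D \<Longrightarrow> inc D' d = inc D d"
      using edge_outside s s'(2) by auto
    show ?thesis
    proof (cases "tval D \<nu> t \<in> B")
      case True
      then have "tval D' \<nu>' t \<in> B'" using ok tval_in_B_iff by auto
      then have "\<not> sat D' \<nu>' \<sigma>' (Inc i s t)"
        using R.outer_inc_not_in_B[of d "i - 1"] Inr s' by (auto simp: univ_def)
      moreover have "\<not> sat D \<nu> \<sigma> (Inc i s t)"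
        using True L.outer_inc_not_in_B[of d "i - 1"] Inr s by (auto simp: univ_def)
      ultimately show ?thesis by blast
    next
      case False
      then have "tval D' \<nu>' t = tval D \<nu> t" using ok tval_outside by auto
      then show ?thesis using s' Inr d by auto
    qed
  qed
qed

lemma sat_Inc_agree:
  assumes ok: "ok Sig mx (length (src D)) M (Inc i s t)"
  shows "sat D' \<nu>' \<sigma>' (Inc i s t) \<longleftrightarrow> sat D \<nu> \<sigma> (Inc i s t)"
proof (cases "tval D \<nu> s \<in> B")
  case True
  then obtain x where "s = FVar x" "\<nu> x \<in> B" using tval_in_B ok by auto
  then show ?thesis using sat_Inc_agree_in_B ok by simp
qed (use sat_Inc_agree_outside ok in simp)

lemma set_match_SVar: "X \<in> W \<Longrightarrow> set_match W \<nu> \<sigma> \<nu>' \<sigma>' (\<sigma> X) (\<sigma>' X) (SVar X)"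
  using agree_sets[OF agr] by (simp add: set_match_def)

lemma set_match_SConst:
  assumes ok: "ok_s Sig mx (length (src D)) M (SConst \<psi>)"
    and outside: "\<And>u. u \<in> univ D - B \<Longrightarrow> sat D' (\<nu>'(0 := u)) \<sigma>' \<psi> \<longleftrightarrow> sat D (\<nu>(0 := u)) \<sigma> \<psi>"
    and closed: "\<And>\<chi>. ok Sig mx (length (src D)) M \<chi> \<Longrightarrow> qrank \<chi> = 0 \<Longrightarrow> fv1 \<chi> = {} \<Longrightarrow>
      fv2 \<chi> = {} \<Longrightarrow> size \<chi> \<le> size \<psi> \<Longrightarrow> models D' \<chi> \<longleftrightarrow> models D \<chi>"
  shows "set_match W \<nu> \<sigma> \<nu>' \<sigma>' (seval D \<nu> \<sigma> (SConst \<psi>)) (seval D' \<nu>' \<sigma>' (SConst \<psi>))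
      (SConst (L.part_formula \<psi> (seval D \<nu> \<sigma> (SConst \<psi>))))"
proof -
  let ?P = "seval D \<nu> \<sigma> (SConst \<psi>)" and ?P' = "seval D' \<nu>' \<sigma>' (SConst \<psi>)"
  have ok': "ok_s Sig mx (length (src D')) M (SConst \<psi>)" using ok src_eq by simp
  have PB: "?P' - B' = ?P - B" using outside univ_outside by auto
  have "qf_transfer (models D') R.const_index \<psi> = qf_transfer (models D) L.const_index \<psi>"
  proof -
    have "R.const_index = L.const_index"
      using src_eq by (simp add: fun_eq_iff L.const_index_def R.const_index_def)
    moreover have "qf_transfer (models D') cs \<psi> = qf_transfer (models D) cs \<psi>" for cs
      using ok closed by (intro qf_transfer_cong(1)[of Sig mx "length (src D)" M]) auto
    ultimately show ?thesis by simp
  qed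
  moreover have "Inl (E ! l) \<in> ?P' \<longleftrightarrow> Inl (E ! l) \<in> ?P" if "l < length E" for l
    using PB L.E_not_in_B R.E_not_in_B that by blast
  then have "[l \<leftarrow> [0..<length E]. Inl (E ! l) \<in> ?P'] = [l \<leftarrow> [0..<length E]. Inl (E ! l) \<in> ?P]"
    by (intro filter_cong) auto
  ultimately have same_formula: "R.part_formula \<psi> ?P' = L.part_formula \<psi> ?P"
    using length_src_parts by (simp add: L.part_formula_def R.part_formula_def)
  show ?thesis
    unfolding set_match_def
  proof (intro conjI)
    show "R.part_set ?P' = seval G' (R.part_asg \<nu>') (R.part_set \<circ> \<sigma>') (SConst (L.part_formula \<psi> ?P))"
      using R.part_set_set_const[OF ok', of \<nu>' \<sigma>'] same_formula by simp
  qed (use PB L.part_formula_wf[OF ok] L.part_set_set_const[OF ok] in auto)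
qed

context
  fixes P P' S
  assumes match: "set_match W \<nu> \<sigma> \<nu>' \<sigma>' P P' S"
begin

lemma set_matchD:
  "P' - B' = P - B" "ok_s Sig mx (length (src G)) M S" "fv2_s S \<subseteq> W"
  "L.part_set P = seval G (L.part_asg \<nu>) (L.part_set \<circ> \<sigma>) S"
  "R.part_set P' = seval G' (R.part_asg \<nu>') (R.part_set \<circ> \<sigma>') S"
  using match by (simp_all add: set_match_def)

lemma mem_agree:
  assumes t: "ok_t (length (src D)) t"
  shows "tval D' \<nu>' t \<in> P' \<longleftrightarrow> tval D \<nu> t \<in> P"
proof (cases "tval D \<nu> t \<in> B")
  case True
  then obtain x where x: "t = FVar x" "\<nu> x \<in> B" using tval_in_B t by blast
  then have x': "\<nu>' x \<in> B'" using agree_in_B[OF agr] by auto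
  have "sat G (L.part_asg \<nu>) (L.part_set \<circ> \<sigma>) (Mem (FVar x) S) =
      sat G' (R.part_asg \<nu>') (R.part_set \<circ> \<sigma>') (Mem (FVar x) S)"
    using x set_matchD(2,3) by (intro agree_sat[OF agr]) auto
  then have "dec' (\<nu>' x) \<in> R.part_set P' \<longleftrightarrow> dec (\<nu> x) \<in> L.part_set P"
    using x x' set_matchD(4,5) by (simp add: L.part_asg_def R.part_asg_def)
  then show ?thesis using L.dec_in_part_set[OF x(2)] R.dec_in_part_set[OF x'] x by simp
next
  case False
  then have "tval D' \<nu>' t = tval D \<nu> t" "tval D \<nu> t \<notin> B'"
    using tval_outside[OF t] tval_outside_B'[OF t] by auto
  then show ?thesis using False set_matchD(1) by (metis Diff_iff)
qed

lemma card_agree: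
  assumes "m \<in> M"
  shows "card P' mod m = c mod m \<longleftrightarrow> card P mod m = c mod m"
proof (cases "finite (P - B)")
  case False
  then have "infinite P" "infinite P'" using set_matchD(1) finite_Diff by metis+
  then show ?thesis by simp
next
  case True
  have "finite B" "finite B'"
    using L.B_subset R.B_subset L.finite_whole R.finite_whole finite_subset by auto
  then have fin: "finite P" "finite P'"
    using True set_matchD(1) finite_Diff2 by metis+
  let ?s = "card {l. l < length E \<and> Inl (E ! l) \<in> P - B}"
  have "sat G (L.part_asg \<nu>) (L.part_set \<circ> \<sigma>) (CardMod S (card (L.part_set P)) m) =
      sat G' (R.part_asg \<nu>') (R.part_set \<circ> \<sigma>') (CardMod S (card (L.part_set P)) m)"
    using assms set_matchD(2,3) by (intro agree_sat[OF agr]) auto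
  then have "card (R.part_set P') mod m = card (L.part_set P) mod m"
    using set_matchD(4,5) by simp
  then have "(card (P' \<inter> B') + ?s) mod m = (card (P \<inter> B) + ?s) mod m"
    using L.card_part_set[OF fin(1)] R.card_part_set[OF fin(2)] set_matchD(1) by simp
  then have "card (P' \<inter> B') mod m = card (P \<inter> B) mod m" by (rule mod_add_right_cancel_nat)
  then have "(card (P' \<inter> B') + card (P - B)) mod m = (card (P \<inter> B) + card (P - B)) mod m"
    by (rule mod_add_cong) (rule refl)
  moreover have "card P = card (P \<inter> B) + card (P - B)" "card P' = card (P' \<inter> B') + card (P - B)"
    using fin set_matchD(1) card_Int_Diff by metis+
  ultimately show ?thesis by simp
qed

end

lemma subset_agree:
  assumes "set_match W \<nu> \<sigma> \<nu>' \<sigma>' P P' S" "set_match W \<nu> \<sigma> \<nu>' \<sigma>' Q Q' T"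
  shows "P' \<subseteq> Q' \<longleftrightarrow> P \<subseteq> Q"
proof -
  note S = set_matchD[OF assms(1)] and T = set_matchD[OF assms(2)]
  have "sat G (L.part_asg \<nu>) (L.part_set \<circ> \<sigma>) (Subset S T) =
      sat G' (R.part_asg \<nu>') (R.part_set \<circ> \<sigma>') (Subset S T)"
    using S(2,3) T(2,3) by (intro agree_sat[OF agr]) auto
  then have "R.part_set P' \<subseteq> R.part_set Q' \<longleftrightarrow> L.part_set P \<subseteq> L.part_set Q"
    using S(4,5) T(4,5) by simp
  then show ?thesis
    using L.subset_iff_part_set[of P Q] R.subset_iff_part_set[of P' Q'] S(1) T(1) by simp
qed

lemma singleton_agree:
  assumes "set_match W \<nu> \<sigma> \<nu>' \<sigma>' P P' S"
  shows "(\<exists>u. P' = {u}) \<longleftrightarrow> (\<exists>u. P = {u})"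
proof -
  note S = set_matchD[OF assms]
  let ?src = "SConst (is_source_in 0 [l \<leftarrow> [0..<length E]. Inl (E ! l) \<in> P - B])"
  have "sat G (L.part_asg \<nu>) (L.part_set \<circ> \<sigma>) (Single S) =
      sat G' (R.part_asg \<nu>') (R.part_set \<circ> \<sigma>') (Single S)"
    using S(2,3) by (intro agree_sat[OF agr]) auto
  moreover have "sat G (L.part_asg \<nu>) (L.part_set \<circ> \<sigma>) (Subset S ?src) =
      sat G' (R.part_asg \<nu>') (R.part_set \<circ> \<sigma>') (Subset S ?src)"
    using S(2,3) L.length_E is_source_in_simps(1)[of 0] by (intro agree_sat[OF agr]) auto
  moreover have "seval G (L.part_asg \<nu>) (L.part_set \<circ> \<sigma>) ?src = L.src_part (P - B)"
    by (rule L.seval_src_part)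
  moreover have "seval G' (R.part_asg \<nu>') (R.part_set \<circ> \<sigma>') ?src = R.src_part (P' - B')"
    unfolding S(1) by (rule R.seval_src_part)
  ultimately show ?thesis
    using L.singleton_iff_part_set[of P] R.singleton_iff_part_set[of P'] S(1,4,5) by simp
qed

end

text \<open>The back steps of the argument are the forth steps of the swapped pair.\<close>

interpretation swap: gluing_pair D' G' B' dec' D G B dec E Sig mx M
  by (rule gluing_pair_swap)

lemma agree_swap:
  assumes agr: "agree k W \<nu> \<sigma> \<nu>' \<sigma>'"
  shows "swap.agree k W \<nu>' \<sigma>' \<nu> \<sigma>"
  unfolding swap.agree_def
proof (intro conjI allI impI)
  fix \<phi> assume \<phi>: "ok Sig mx (length (src G')) M \<phi>" "qrank \<phi> \<le> k" "fv1 \<phi> \<subseteq> {x. \<nu>' x \<in> B'}" "fv2 \<phi> \<subseteq> W"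
  then show "sat G' (R.part_asg \<nu>') (R.part_set \<circ> \<sigma>') \<phi> = sat G (L.part_asg \<nu>) (L.part_set \<circ> \<sigma>) \<phi>"
    using agree_sat[OF agr, of \<phi>] agree_in_B[OF agr] length_src_parts by simp
qed (use agreeD[OF agr] in \<open>auto\<close>)

lemma agree_unswap:
  assumes sw: "swap.agree k W \<nu>' \<sigma>' \<nu> \<sigma>"
  shows "agree k W \<nu> \<sigma> \<nu>' \<sigma>'"
proof (rule agreeI)
  fix x
  show in_B: "\<nu>' x \<in> B' \<longleftrightarrow> \<nu> x \<in> B" using swap.agree_in_B[OF sw] by simp
  show "\<nu> x \<notin> B \<Longrightarrow> \<nu>' x = \<nu> x" using in_B swap.agree_outside[OF sw] by metis
next
  fix \<phi> assume \<phi>: "ok Sig mx (length (src G)) M \<phi>" "qrank \<phi> \<le> k" "fv1 \<phi> \<subseteq> {x. \<nu> x \<in> B}"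
    "fv2 \<phi> \<subseteq> W"
  then show "sat G (L.part_asg \<nu>) (L.part_set \<circ> \<sigma>) \<phi> = sat G' (R.part_asg \<nu>') (R.part_set \<circ> \<sigma>') \<phi>"
    using swap.agree_sat[OF sw, of \<phi>] swap.agree_in_B[OF sw] length_src_parts by simp
qed (use swap.agree_sets[OF sw] in blast)

lemma sat_Ex1_agree:
  assumes agr: "agree (Suc k) W \<nu> \<sigma> \<nu>' \<sigma>'"
    and IH: "\<And>\<nu> \<sigma> \<nu>' \<sigma>'. agree k W \<nu> \<sigma> \<nu>' \<sigma>' \<Longrightarrow> sat D' \<nu>' \<sigma>' \<psi> \<longleftrightarrow> sat D \<nu> \<sigma> \<psi>"
  shows "sat D' \<nu>' \<sigma>' (cmso.Ex1 x \<psi>) \<longleftrightarrow> sat D \<nu> \<sigma> (cmso.Ex1 x \<psi>)"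
proof
  assume "sat D \<nu> \<sigma> (cmso.Ex1 x \<psi>)"
  then obtain u where u: "u \<in> univ D" "sat D (\<nu>(x := u)) \<sigma> \<psi>" by auto
  show "sat D' \<nu>' \<sigma>' (cmso.Ex1 x \<psi>)"
  proof (cases "u \<in> B")
    case True
    then obtain u' where u': "u' \<in> B'" "agree k W (\<nu>(x := u)) \<sigma> (\<nu>'(x := u')) \<sigma>'"
      using agree_forth_elem[OF agr] by blast
    then have "sat D' (\<nu>'(x := u')) \<sigma>' \<psi>" using IH u(2) by blast
    then show ?thesis using u'(1) R.B_subset by auto
  next
    case False
    then have "u \<notin> B'" "u \<in> univ D'" using u univ_outside by auto
    then have "agree k W (\<nu>(x := u)) \<sigma> (\<nu>'(x := u)) \<sigma>'"
      using agree_upd_outside[OF agree_mono[OF agr] False] by simp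
    then have "sat D' (\<nu>'(x := u)) \<sigma>' \<psi>" using IH u(2) by blast
    then show ?thesis using \<open>u \<in> univ D'\<close> by auto
  qed
next
  assume "sat D' \<nu>' \<sigma>' (cmso.Ex1 x \<psi>)"
  then obtain u' where u': "u' \<in> univ D'" "sat D' (\<nu>'(x := u')) \<sigma>' \<psi>" by auto
  show "sat D \<nu> \<sigma> (cmso.Ex1 x \<psi>)"
  proof (cases "u' \<in> B'")
    case True
    then obtain u where u: "u \<in> B" "swap.agree k W (\<nu>'(x := u')) \<sigma>' (\<nu>(x := u)) \<sigma>"
      using swap.agree_forth_elem[OF agree_swap[OF agr]] by blast
    then have "sat D (\<nu>(x := u)) \<sigma> \<psi>" using IH[OF agree_unswap] u'(2) by blast
    then show ?thesis using u(1) L.B_subset by auto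
  next
    case False
    then have "u' \<notin> B" "u' \<in> univ D" using u' univ_outside by auto
    then have "agree k W (\<nu>(x := u')) \<sigma> (\<nu>'(x := u')) \<sigma>'"
      using agree_upd_outside[OF agree_mono[OF agr] _ False] by simp
    then have "sat D (\<nu>(x := u')) \<sigma> \<psi>" using IH u'(2) by blast
    then show ?thesis using \<open>u' \<in> univ D\<close> by auto
  qed
qed

lemma sat_Ex2_agree:
  assumes agr: "agree (Suc k) W \<nu> \<sigma> \<nu>' \<sigma>'"
    and IH: "\<And>\<nu> \<sigma> \<nu>' \<sigma>'. agree k (insert X W) \<nu> \<sigma> \<nu>' \<sigma>' \<Longrightarrow> sat D' \<nu>' \<sigma>' \<psi> \<longleftrightarrow> sat D \<nu> \<sigma> \<psi>"
  shows "sat D' \<nu>' \<sigma>' (Ex2 X \<psi>) \<longleftrightarrow> sat D \<nu> \<sigma> (Ex2 X \<psi>)"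
proof
  assume "sat D \<nu> \<sigma> (Ex2 X \<psi>)"
  then obtain U where "U \<subseteq> univ D" "sat D \<nu> (\<sigma>(X := U)) \<psi>" by auto
  moreover obtain U' where "U' \<subseteq> univ D'" "agree k (insert X W) \<nu> (\<sigma>(X := U)) \<nu>' (\<sigma>'(X := U'))"
    using agree_forth_set[OF agr \<open>U \<subseteq> univ D\<close>] by blast
  ultimately show "sat D' \<nu>' \<sigma>' (Ex2 X \<psi>)" using IH by auto
next
  assume "sat D' \<nu>' \<sigma>' (Ex2 X \<psi>)"
  then obtain U' where "U' \<subseteq> univ D'" "sat D' \<nu>' (\<sigma>'(X := U')) \<psi>" by auto
  moreover obtain U where "U \<subseteq> univ D" "swap.agree k (insert X W) \<nu>' (\<sigma>'(X := U')) \<nu> (\<sigma>(X := U))"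
    using swap.agree_forth_set[OF agree_swap[OF agr] \<open>U' \<subseteq> univ D'\<close>] by blast
  ultimately show "sat D \<nu> \<sigma> (Ex2 X \<psi>)" using IH[OF agree_unswap] by auto
qed

lemma set_match_exists:
  assumes agr: "agree k W \<nu> \<sigma> \<nu>' \<sigma>'" and ok: "ok_s Sig mx (length (src D)) M S"
    and fv: "fv2_s S \<subseteq> W"
    and IH: "\<And>\<psi> \<nu> \<sigma> \<nu>' \<sigma>'. size \<psi> < size S \<Longrightarrow> agree k W \<nu> \<sigma> \<nu>' \<sigma>' \<Longrightarrow>
      ok Sig mx (length (src D)) M \<psi> \<Longrightarrow> qrank \<psi> = 0 \<Longrightarrow> fv2 \<psi> = {} \<Longrightarrow>
      sat D' \<nu>' \<sigma>' \<psi> \<longleftrightarrow> sat D \<nu> \<sigma> \<psi>"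
  shows "\<exists>T. set_match W \<nu> \<sigma> \<nu>' \<sigma>' (seval D \<nu> \<sigma> S) (seval D' \<nu>' \<sigma>' S) T"
proof (cases S)
  case (SVar X)
  then show ?thesis using set_match_SVar[OF agr] fv by auto
next
  case (SConst \<psi>)
  have \<psi>: "ok Sig mx (length (src D)) M \<psi>" "qrank \<psi> = 0" "fv2 \<psi> = {}" "size \<psi> < size S"
    using ok SConst by auto
  have "sat D' (\<nu>'(0 := u)) \<sigma>' \<psi> \<longleftrightarrow> sat D (\<nu>(0 := u)) \<sigma> \<psi>" if "u \<in> univ D - B" for u
  proof -
    have u: "u \<notin> B" "u \<notin> B'" using that univ_outside by blast+
    show ?thesis using IH[OF \<psi>(4) agree_upd_outside[OF agr u] \<psi>(1-3)] .
  qed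
  moreover have "models D' \<chi> \<longleftrightarrow> models D \<chi>"
    if \<chi>: "ok Sig mx (length (src D)) M \<chi>" "qrank \<chi> = 0" "fv1 \<chi> = {}" "fv2 \<chi> = {}"
      "size \<chi> \<le> size \<psi>" for \<chi>
  proof -
    have "sat D' \<nu>' \<sigma>' \<chi> \<longleftrightarrow> sat D \<nu> \<sigma> \<chi>" using IH[OF _ agr \<chi>(1,2,4)] \<chi>(5) \<psi>(4) by simp
    then show ?thesis using sat_closed[OF \<chi>(1,3,4)] by metis
  qed
  ultimately show ?thesis using set_match_SConst[OF agr ok[unfolded SConst]] SConst by blast
qed

theorem sat_agree:
  assumes "agree k W \<nu> \<sigma> \<nu>' \<sigma>'" "ok Sig mx (length (src D)) M \<phi>" "qrank \<phi> \<le> k" "fv2 \<phi> \<subseteq> W"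
  shows "sat D' \<nu>' \<sigma>' \<phi> \<longleftrightarrow> sat D \<nu> \<sigma> \<phi>"
  using assms
proof (induction "size \<phi>" arbitrary: \<phi> k W \<nu> \<sigma> \<nu>' \<sigma>' rule: less_induct)
  case less
  note agr = less.prems(1) and ok = less.prems(2) and wf = less.prems(2-4)
  have IH: "sat D' \<nu>1' \<sigma>1' \<psi> \<longleftrightarrow> sat D \<nu>1 \<sigma>1 \<psi>"
    if "size \<psi> < size \<phi>" "agree k1 W1 \<nu>1 \<sigma>1 \<nu>1' \<sigma>1'" "ok Sig mx (length (src D)) M \<psi>"
      "qrank \<psi> \<le> k1" "fv2 \<psi> \<subseteq> W1" for \<psi> k1 W1 \<nu>1 \<sigma>1 \<nu>1' \<sigma>1'
    using less.hyps that by blast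
  have match: "\<exists>T. set_match W \<nu> \<sigma> \<nu>' \<sigma>' (seval D \<nu> \<sigma> S) (seval D' \<nu>' \<sigma>' S) T"
    if "size S < size \<phi>" "ok_s Sig mx (length (src D)) M S" "fv2_s S \<subseteq> W" for S
    using that(2,3)
  proof (rule set_match_exists[OF agr])
    fix \<psi> \<nu>1 \<sigma>1 \<nu>1' \<sigma>1'
    assume "size \<psi> < size S" "agree k W \<nu>1 \<sigma>1 \<nu>1' \<sigma>1'" "ok Sig mx (length (src D)) M \<psi>"
      "qrank \<psi> = 0" "fv2 \<psi> = {}"
    then show "sat D' \<nu>1' \<sigma>1' \<psi> \<longleftrightarrow> sat D \<nu>1 \<sigma>1 \<psi>" using that(1) by (intro IH) auto
  qed
  show ?case
  proof (cases \<phi>)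
    case (Mem t S)
    then obtain T where "set_match W \<nu> \<sigma> \<nu>' \<sigma>' (seval D \<nu> \<sigma> S) (seval D' \<nu>' \<sigma>' S) T"
      using match wf by fastforce
    then show ?thesis using mem_agree[OF agr] ok Mem by simp
  next
    case (CardMod S c m)
    then obtain T where "set_match W \<nu> \<sigma> \<nu>' \<sigma>' (seval D \<nu> \<sigma> S) (seval D' \<nu>' \<sigma>' S) T"
      using match wf by fastforce
    then show ?thesis using card_agree[OF agr] ok CardMod by simp
  next
    case (Subset S S')
    then obtain T T' where "set_match W \<nu> \<sigma> \<nu>' \<sigma>' (seval D \<nu> \<sigma> S) (seval D' \<nu>' \<sigma>' S) T"
      "set_match W \<nu> \<sigma> \<nu>' \<sigma>' (seval D \<nu> \<sigma> S') (seval D' \<nu>' \<sigma>' S') T'"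
      using match[of S] match[of S'] wf by auto
    then show ?thesis using subset_agree[OF agr] Subset by simp
  next
    case (Single S)
    then obtain T where "set_match W \<nu> \<sigma> \<nu>' \<sigma>' (seval D \<nu> \<sigma> S) (seval D' \<nu>' \<sigma>' S) T"
      using match wf by fastforce
    then show ?thesis using singleton_agree[OF agr] Single by simp
  next
    case (Neg \<psi>)
    then show ?thesis using IH[of \<psi>] wf agr by simp
  next
    case (Conj \<psi> \<psi>')
    then show ?thesis using IH[of \<psi>] IH[of \<psi>'] wf agr by simp
  next
    case (Ex1 x \<psi>)
    then obtain k' where "k = Suc k'" "qrank \<psi> \<le> k'" using wf by (cases k) auto
    then show ?thesis using sat_Ex1_agree[of k' W \<nu> \<sigma> \<nu>' \<sigma>' \<psi> x] IH[of \<psi>] agr wf Ex1 by simp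
  next
    case (Ex2 X \<psi>)
    then obtain k' where "k = Suc k'" "qrank \<psi> \<le> k'" using wf by (cases k) auto
    moreover have "fv2 \<psi> \<subseteq> insert X W" using wf Ex2 by auto
    ultimately show ?thesis using sat_Ex2_agree[of k' W \<nu> \<sigma> \<nu>' \<sigma>' X \<psi>] IH[of \<psi>] agr wf Ex2 by simp
  qed (use sat_Eq_agree[OF agr] sat_Lab_agree[OF agr] sat_Inc_agree[OF agr] ok in simp_all)
qed

end

lemma gluing_models_iff:
  assumes "gluing_pair D G B dec D' G' B' dec' E" and "(G, G') \<in> cmso_equiv Sig ar M r"
    and "\<phi> \<in> sentences Sig ar M r (length (src D))"
  shows "models D' \<phi> \<longleftrightarrow> models D \<phi>"
proof -
  interpret gluing_pair D G B dec D' G' B' dec' E Sig "max_arity Sig ar" M by fact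
  \<comment> \<open>sentences are closed, and an assignment avoiding both parts is a starting position\<close>
  have "finite (B \<union> B')"
    using L.B_subset R.B_subset L.finite_whole R.finite_whole finite_subset by auto
  then obtain u :: "nat + nat" where u: "u \<notin> B \<union> B'"
    using ex_new_if_finite[of "B \<union> B'"] by auto
  have "agree r {} (\<lambda>_. u) (\<lambda>_. {}) (\<lambda>_. u) (\<lambda>_. {})"
  proof (rule agreeI)
    fix \<psi> assume \<psi>: "ok Sig (max_arity Sig ar) (length (src G)) M \<psi>" "qrank \<psi> \<le> r"
      "fv1 \<psi> \<subseteq> {x. u \<in> B}" "fv2 \<psi> \<subseteq> {}"
    then have "\<psi> \<in> sentences Sig ar M r (arity G)" using u by (auto simp: sentences_def arity_def)
    then have "models G \<psi> \<longleftrightarrow> models G' \<psi>" using assms(2) by (auto simp: cmso_equiv_def)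
    then show "sat G (L.part_asg (\<lambda>_. u)) (L.part_set \<circ> (\<lambda>_. {})) \<psi> =
        sat G' (R.part_asg (\<lambda>_. u)) (R.part_set \<circ> (\<lambda>_. {})) \<psi>"
      using sat_closed[OF \<psi>(1)] \<psi>(3,4) u by auto
  qed (use u in auto)
  then have "sat D' (\<lambda>_. u) (\<lambda>_. {}) \<phi> \<longleftrightarrow> sat D (\<lambda>_. u) (\<lambda>_. {}) \<phi>"
    using assms(3) by (intro sat_agree) (auto simp: sentences_def)
  then show ?thesis using assms(3) sat_closed[of Sig "max_arity Sig ar" "length (src D)" M \<phi>]
    by (auto simp: sentences_def)
qed

section \<open>Flattening as a gluing\<close>

lemma even_neq_odd [simp]:
  "(2 * a :: nat) \<noteq> 2 * b + 1" "(2 * b + 1 :: nat) \<noteq> 2 * a"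
  "(2 * a :: nat) \<noteq> Suc (2 * b)" "Suc (2 * b) \<noteq> 2 * a"
  by presburger+

lemma verts_flat:
  "x \<in> verts (flat K) \<longleftrightarrow> (\<exists>v\<in>verts K. x = 2 * v) \<or>
     (\<exists>e v. e \<in> edges K \<and> v \<in> verts (lab K e) \<and> v \<notin> set (src (lab K e)) \<and>
        x = 2 * prod_encode (e, v) + 1)"
  by (auto simp: flat_def)

lemma edges_flat:
  "d \<in> edges (flat K) \<longleftrightarrow> (\<exists>e f. e \<in> edges K \<and> f \<in> edges (lab K e) \<and> d = prod_encode (e, f))"
  by (auto simp: flat_def)

lemma lab_flat [simp]: "lab (flat K) (prod_encode (e, f)) = lab (lab K e) f"
  and inc_flat [simp]: "inc (flat K) (prod_encode (e, f)) = map (flat_vmap K e) (inc (lab K e) f)"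
  and src_flat [simp]: "src (flat K) = map (\<lambda>v. 2 * v) (src K)"
  by (simp_all add: flat_def)

lemma flat_vmap_src:
  assumes "distinct (src (lab K e))" "l < length (src (lab K e))"
  shows "flat_vmap K e (src (lab K e) ! l) = 2 * (inc K e ! l)"
proof -
  have "(LEAST i. i < length (src (lab K e)) \<and> src (lab K e) ! i = src (lab K e) ! l) = l"
    by (rule Least_equality) (use assms in \<open>auto simp: nth_eq_iff_index_eq\<close>)
  then show ?thesis using assms by (simp add: flat_vmap_def)
qed

lemma flat_vmap_internal: "v \<notin> set (src (lab K e)) \<Longrightarrow> flat_vmap K e v = 2 * prod_encode (e, v) + 1"
  by (simp add: flat_vmap_def)

lemma flat_vmap_cong: "lab K' e = lab K e \<Longrightarrow> inc K' e = inc K e \<Longrightarrow> flat_vmap K' e = flat_vmap K e"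
  by (simp add: flat_vmap_def fun_eq_iff)

lemma HS_D:
  assumes "G \<in> HS Sig ar"
  shows "finite (verts G)" "finite (edges G)" "distinct (src G)" "set (src G) \<subseteq> verts G"
    "\<And>f. f \<in> edges G \<Longrightarrow> lab G f \<in> Sig \<and> length (inc G f) = ar (lab G f) \<and>
       distinct (inc G f) \<and> set (inc G f) \<subseteq> verts G"
  using assms unfolding HS_def wf_hg_def by auto

definition flat_part :: "'a hg hg \<Rightarrow> nat \<Rightarrow> (nat + nat) set" where
  "flat_part K e =
     {Inl (2 * prod_encode (e, v) + 1) | v. v \<in> verts (lab K e) \<and> v \<notin> set (src (lab K e))}
     \<union> {Inr (prod_encode (e, f)) | f. f \<in> edges (lab K e)}"

definition flat_dec :: "nat + nat \<Rightarrow> nat + nat" where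
  "flat_dec x = (case x of Inl w \<Rightarrow> Inl (snd (prod_decode (w div 2))) | Inr d \<Rightarrow> Inr (snd (prod_decode d)))"

lemma flat_dec_simps [simp]:
  "flat_dec (Inl (2 * prod_encode (e, v) + 1)) = Inl v" "flat_dec (Inr (prod_encode (e, f))) = Inr f"
  "flat_dec (Inl (Suc (2 * prod_encode (e, v)))) = Inl v"
  by (simp_all add: flat_dec_def)

lemma flat_part_iff:
  "x \<in> flat_part K e \<longleftrightarrow>
     (\<exists>v. v \<in> verts (lab K e) \<and> v \<notin> set (src (lab K e)) \<and> x = Inl (2 * prod_encode (e, v) + 1)) \<or>
     (\<exists>f. f \<in> edges (lab K e) \<and> x = Inr (prod_encode (e, f)))"
  unfolding flat_part_def by blast

lemma even_not_in_flat_part [simp]: "Inl (2 * w) \<notin> flat_part K e"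
  unfolding flat_part_iff by auto

context
  fixes K :: "'a hg hg" and Sig ar
  assumes K: "wf_hg (HS Sig ar) arity K"
begin

lemma label_HS: "e \<in> edges K \<Longrightarrow> lab K e \<in> HS Sig ar"
  and length_inc: "e \<in> edges K \<Longrightarrow> length (inc K e) = length (src (lab K e))"
  and inc_verts: "e \<in> edges K \<Longrightarrow> set (inc K e) \<subseteq> verts K"
  and distinct_inc: "e \<in> edges K \<Longrightarrow> distinct (inc K e)"
  using K unfolding wf_hg_def arity_def by auto

lemma finite_flat: "finite (verts (flat K))" "finite (edges (flat K))"
proof -
  have fin: "finite (SIGMA e:edges K. verts (lab K e))" "finite (SIGMA e:edges K. edges (lab K e))"
    using K HS_D(1,2)[OF label_HS] by (auto simp: wf_hg_def)
  have "verts (flat K) \<subseteq> (\<lambda>v. 2 * v) ` verts K \<union>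
      (\<lambda>(e, v). 2 * prod_encode (e, v) + 1) ` (SIGMA e:edges K. verts (lab K e))"
    by (auto simp: verts_flat)
  then show "finite (verts (flat K))"
    using fin K finite_subset by (auto simp: wf_hg_def)
  have "edges (flat K) \<subseteq> prod_encode ` (SIGMA e:edges K. edges (lab K e))"
    by (auto simp: edges_flat)
  then show "finite (edges (flat K))"
    using fin finite_subset by auto
qed

lemma flat_vmap_cases:
  assumes e: "e \<in> edges K" and v: "v \<in> verts (lab K e)"
  obtains (source) l where "l < length (src (lab K e))" "v = src (lab K e) ! l"
      "flat_vmap K e v = 2 * (inc K e ! l)" "inc K e ! l \<in> verts K"
  | (internal) "v \<notin> set (src (lab K e))" "flat_vmap K e v = 2 * prod_encode (e, v) + 1"
proof (cases "v \<in> set (src (lab K e))")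
  case True
  then obtain l where l: "l < length (src (lab K e))" "v = src (lab K e) ! l"
    by (metis in_set_conv_nth)
  moreover have "flat_vmap K e v = 2 * (inc K e ! l)"
    using flat_vmap_src[OF HS_D(3)[OF label_HS[OF e]] l(1)] l(2) by simp
  moreover have "inc K e ! l \<in> verts K"
    using l(1) length_inc[OF e] inc_verts[OF e] by (metis nth_mem subsetD)
  ultimately show thesis by (rule source)
qed (simp add: flat_vmap_internal internal)

lemma inj_flat_vmap:
  assumes e: "e \<in> edges K"
  shows "inj_on (flat_vmap K e) (verts (lab K e))"
proof
  fix v w assume v: "v \<in> verts (lab K e)" and w: "w \<in> verts (lab K e)"
    and eq: "flat_vmap K e v = flat_vmap K e w"
  from e v show "v = w"
  proof (cases rule: flat_vmap_cases)
    case (source l)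
    from e w show ?thesis
    proof (cases rule: flat_vmap_cases)
      case (source l')
      then have "l = l'"
        using eq \<open>flat_vmap K e v = 2 * (inc K e ! l)\<close> \<open>l < length (src (lab K e))\<close>
          distinct_inc[OF e] length_inc[OF e] by (simp add: nth_eq_iff_index_eq)
      then show ?thesis using \<open>v = src (lab K e) ! l\<close> source by simp
    qed (use eq source in simp)
  next
    case internal
    from e w show ?thesis
      by (cases rule: flat_vmap_cases) (use eq internal in \<open>simp_all add: prod_encode_eq\<close>)
  qed
qed

lemma flat_HS: "flat K \<in> HS Sig ar"
  unfolding HS_def mem_Collect_eq wf_hg_def
proof (intro conjI ballI)
  show "finite (verts (flat K))" "finite (edges (flat K))" by (rule finite_flat)+
next
  fix d assume "d \<in> edges (flat K)"
  then obtain e f where ef: "e \<in> edges K" "f \<in> edges (lab K e)" "d = prod_encode (e, f)"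
    unfolding edges_flat by blast
  note Gf = HS_D(5)[OF label_HS[OF ef(1)] ef(2)]
  show "lab (flat K) d \<in> Sig" "length (inc (flat K) d) = ar (lab (flat K) d)"
    using ef Gf by simp_all
  show "distinct (inc (flat K) d)"
    using ef Gf inj_flat_vmap[OF ef(1)] by (simp add: distinct_map inj_on_subset)
  show "set (inc (flat K) d) \<subseteq> verts (flat K)"
  proof
    fix x assume "x \<in> set (inc (flat K) d)"
    then obtain v where v: "v \<in> verts (lab K e)" "x = flat_vmap K e v" using ef Gf by auto
    from ef(1) v(1) show "x \<in> verts (flat K)"
      by (cases rule: flat_vmap_cases) (use v ef in \<open>auto simp: verts_flat\<close>)
  qed
next
  show "distinct (src (flat K))" using K by (simp add: wf_hg_def distinct_map inj_on_def)
  show "set (src (flat K)) \<subseteq> verts (flat K)" using K by (auto simp: wf_hg_def verts_flat)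
qed

context
  fixes e assumes e: "e \<in> edges K"
begin

lemma corr_flat_vmap:
  assumes v: "v \<in> verts (lab K e)"
  shows "glue_corresp (flat_part K e) flat_dec (map (\<lambda>v. 2 * v) (inc K e)) (lab K e)
           (Inl (flat_vmap K e v)) (Inl v)"
  using e v
proof (cases rule: flat_vmap_cases)
  case (source l)
  then show ?thesis using length_inc[OF e] by (auto simp: glue_corresp_def)
next
  case internal
  then show ?thesis using v by (auto simp: glue_corresp_def flat_part_iff)
qed

lemma flat_dec_image: "flat_dec ` flat_part K e = internal (lab K e)"
proof
  show "flat_dec ` flat_part K e \<subseteq> internal (lab K e)"
    by (auto simp: flat_part_iff internal_def univ_def)
next
  show "internal (lab K e) \<subseteq> flat_dec ` flat_part K e"
  proof
    fix x assume "x \<in> internal (lab K e)"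
    then consider v where "v \<in> verts (lab K e)" "v \<notin> set (src (lab K e))" "x = Inl v"
      | f where "f \<in> edges (lab K e)" "x = Inr f"
      unfolding internal_def univ_def by blast
    then show "x \<in> flat_dec ` flat_part K e"
    proof cases
      case (1 v)
      then show ?thesis
        by (intro rev_image_eqI[of "Inl (2 * prod_encode (e, v) + 1)"]) (auto simp: flat_part_iff)
    next
      case (2 f)
      then show ?thesis
        by (intro rev_image_eqI[of "Inr (prod_encode (e, f))"]) (auto simp: flat_part_iff)
    qed
  qed
qed

lemma flat_outer_edge:
  assumes "Inr d \<in> univ (flat K) - flat_part K e"
  shows "Inl ` set (inc (flat K) d) \<inter> flat_part K e = {}"
proof -
  obtain e' f where ef: "e' \<in> edges K" "f \<in> edges (lab K e')" "d = prod_encode (e', f)"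
    using assms by (auto simp: univ_def edges_flat)
  then have "e' \<noteq> e" using assms by (auto simp: flat_part_iff)
  have "Inl (flat_vmap K e' w) \<notin> flat_part K e" if "w \<in> set (inc (lab K e') f)" for w
  proof -
    have "w \<in> verts (lab K e')" using that HS_D(5)[OF label_HS[OF ef(1)] ef(2)] by blast
    from ef(1) this show ?thesis
      by (cases rule: flat_vmap_cases) (use \<open>e' \<noteq> e\<close> in \<open>auto simp: flat_part_iff prod_encode_eq\<close>)
  qed
  then show ?thesis using ef by auto
qed

lemma gluing_flat: "gluing (flat K) (lab K e) (flat_part K e) flat_dec (map (\<lambda>v. 2 * v) (inc K e))"
proof
  note G = HS_D[OF label_HS[OF e]]
  show "finite (univ (flat K))" using finite_flat by (simp add: univ_def)
  show "finite (univ (lab K e))" using G by (simp add: univ_def)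
  show "flat_part K e \<subseteq> univ (flat K)" using e by (auto simp: flat_part_iff univ_def verts_flat edges_flat)
  show "inj_on flat_dec (flat_part K e)" by (auto simp: inj_on_def flat_part_iff)
  show "flat_dec ` flat_part K e = internal (lab K e)" by (rule flat_dec_image)
  show "b \<in> flat_part K e \<Longrightarrow> isl (flat_dec b) = isl b" for b by (auto simp: flat_part_iff)
  show "length (map (\<lambda>v. 2 * v) (inc K e)) = length (src (lab K e))" using length_inc[OF e] by simp
  show "distinct (map (\<lambda>v. 2 * v) (inc K e))" using distinct_inc[OF e] by (simp add: distinct_map inj_on_def)
  show "distinct (src (lab K e))" by (rule G(3))
  show "Inl ` set (src (lab K e)) \<subseteq> univ (lab K e)" using G(4) by (auto simp: univ_def)
  show "Inl ` set (map (\<lambda>v. 2 * v) (inc K e)) \<subseteq> univ (flat K) - flat_part K e"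
    using inc_verts[OF e] by (auto simp: univ_def verts_flat)
  show "Inl ` set (src (flat K)) \<inter> flat_part K e = {}" by auto
  show "Inr d \<in> univ (flat K) - flat_part K e \<Longrightarrow> Inl ` set (inc (flat K) d) \<inter> flat_part K e = {}"
    for d by (rule flat_outer_edge)
next
  fix d assume "Inr d \<in> flat_part K e"
  then obtain f where f: "f \<in> edges (lab K e)" "d = prod_encode (e, f)" by (auto simp: flat_part_iff)
  have "set (inc (lab K e) f) \<subseteq> verts (lab K e)" using HS_D(5)[OF label_HS[OF e] f(1)] by blast
  then have "list_all2 (\<lambda>v w. glue_corresp (flat_part K e) flat_dec (map (\<lambda>v. 2 * v) (inc K e)) (lab K e)
      (Inl v) (Inl w)) (inc (flat K) d) (inc (lab K e) f)"
    using f corr_flat_vmap by (auto simp: list_all2_map1 list_all2_same)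
  then show "\<exists>f. flat_dec (Inr d) = Inr f \<and> f \<in> edges (lab K e) \<and> lab (flat K) d = lab (lab K e) f \<and>
      list_all2 (\<lambda>v w. glue_corresp (flat_part K e) flat_dec (map (\<lambda>v. 2 * v) (inc K e)) (lab K e)
        (Inl v) (Inl w)) (inc (flat K) d) (inc (lab K e) f)"
    using f by auto
qed

end

end

lemma univ_flat_outside:
  "x \<in> univ (flat K) - flat_part K e \<longleftrightarrow> (\<exists>v\<in>verts K. x = Inl (2 * v)) \<or>
     (\<exists>e' v. e' \<in> edges K \<and> e' \<noteq> e \<and> v \<in> verts (lab K e') \<and> v \<notin> set (src (lab K e')) \<and>
        x = Inl (2 * prod_encode (e', v) + 1)) \<or>
     (\<exists>e' f. e' \<in> edges K \<and> e' \<noteq> e \<and> f \<in> edges (lab K e') \<and> x = Inr (prod_encode (e', f)))"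
  (is "_ \<longleftrightarrow> ?outside")
proof
  assume x: "x \<in> univ (flat K) - flat_part K e"
  then consider w where "w \<in> verts (flat K)" "x = Inl w" | d where "d \<in> edges (flat K)" "x = Inr d"
    by (auto simp: univ_def)
  then show ?outside
  proof cases
    case 1
    then show ?thesis using x unfolding verts_flat by (auto simp: flat_part_iff)
  next
    case 2
    then show ?thesis using x unfolding edges_flat by (auto simp: flat_part_iff)
  qed
next
  assume ?outside
  then show "x \<in> univ (flat K) - flat_part K e"
    by (auto simp: flat_part_iff univ_def verts_flat edges_flat prod_encode_eq)
qed

lemma same_outside_flat:
  assumes same: "verts K' = verts K" "edges K' = edges K" "inc K' = inc K" "src K' = src K"
    and labs: "\<And>d. d \<in> edges K \<Longrightarrow> d \<noteq> e \<Longrightarrow> lab K' d = lab K d"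
  shows "same_outside (flat K) (flat_part K e) (flat K') (flat_part K' e)"
  unfolding same_outside_def
proof (intro conjI allI impI)
  show "univ (flat K) - flat_part K e = univ (flat K') - flat_part K' e"
    unfolding set_eq_iff univ_flat_outside same using labs by auto
  show "src (flat K) = src (flat K')" using same by simp
next
  fix d assume "Inr d \<in> univ (flat K) - flat_part K e"
  then obtain e' f where ef: "e' \<in> edges K" "e' \<noteq> e" "f \<in> edges (lab K e')" "d = prod_encode (e', f)"
    unfolding univ_flat_outside by auto
  then have "flat_vmap K' e' = flat_vmap K e'" by (intro flat_vmap_cong) (simp_all add: labs same)
  then show "lab (flat K) d = lab (flat K') d" "inc (flat K) d = inc (flat K') d"
    using ef labs by simp_all
qed

lemma flat_cong_edges:
  assumes same: "verts K' = verts K" "edges K' = edges K" "inc K' = inc K" "src K' = src K"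
    and labs: "\<And>d. d \<in> edges K \<Longrightarrow> lab K' d = lab K d"
  shows "models (flat K') \<phi> \<longleftrightarrow> models (flat K) \<phi>"
  unfolding models_def
proof (rule sat_cong_edges)
  show "verts (flat K') = verts (flat K)" using same labs by (auto simp: verts_flat)
  show "edges (flat K') = edges (flat K)" using same labs by (auto simp: edges_flat)
  show "src (flat K') = src (flat K)" using same by simp
next
  fix d assume "d \<in> edges (flat K)"
  then obtain e f where ef: "e \<in> edges K" "f \<in> edges (lab K e)" "d = prod_encode (e, f)"
    unfolding edges_flat by blast
  then have "flat_vmap K' e = flat_vmap K e" by (intro flat_vmap_cong) (simp_all add: labs same)
  then show "lab (flat K') d = lab (flat K) d \<and> inc (flat K') d = inc (flat K) d"
    using ef labs by simp
qed

lemma cmso_equiv_equiv: "equiv (HS Sig ar) (cmso_equiv Sig ar M r)"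
  unfolding equiv_def refl_on_def sym_def trans_def cmso_equiv_def by auto

lemma cmso_equiv_refl: "G \<in> HS Sig ar \<Longrightarrow> (G, G) \<in> cmso_equiv Sig ar M r"
  and cmso_equiv_trans:
    "(G, H) \<in> cmso_equiv Sig ar M r \<Longrightarrow> (H, J) \<in> cmso_equiv Sig ar M r \<Longrightarrow> (G, J) \<in> cmso_equiv Sig ar M r"
  using cmso_equiv_equiv[of Sig ar M r] unfolding equiv_def refl_on_def trans_def by blast+

lemma flat_relabel_equiv:
  assumes K: "wf_hg (HS Sig ar) arity K" and K': "wf_hg (HS Sig ar) arity K'"
    and same: "verts K' = verts K" "edges K' = edges K" "inc K' = inc K" "src K' = src K"
    and labs: "\<And>d. d \<in> edges K \<Longrightarrow> d \<noteq> e \<Longrightarrow> lab K' d = lab K d"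
    and e: "e \<in> edges K" and equiv: "(lab K e, lab K' e) \<in> cmso_equiv Sig ar M r"
  shows "(flat K, flat K') \<in> cmso_equiv Sig ar M r"
proof -
  have "gluing_pair (flat K) (lab K e) (flat_part K e) flat_dec
      (flat K') (lab K' e) (flat_part K' e) flat_dec (map (\<lambda>v. 2 * v) (inc K e))"
    using gluing_flat[OF K e] gluing_flat[OF K'] e same same_outside_flat[OF same labs]
    by (simp add: gluing_pair_def gluing_pair_axioms_def)
  then have "models (flat K') \<phi> \<longleftrightarrow> models (flat K) \<phi>"
    if "\<phi> \<in> sentences Sig ar M r (length (src (flat K)))" for \<phi>
    using gluing_models_iff equiv that by blast
  then show ?thesis
    using flat_HS[OF K] flat_HS[OF K'] same by (auto simp: cmso_equiv_def arity_def)
qed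

lemma flat_relabel_all_equiv:
  assumes K: "wf_hg (HS Sig ar) arity K" and K': "wf_hg (HS Sig ar) arity K'"
    and same: "verts K' = verts K" "edges K' = edges K" "inc K' = inc K" "src K' = src K"
    and equiv: "\<And>e. e \<in> edges K \<Longrightarrow> (lab K e, lab K' e) \<in> cmso_equiv Sig ar M r"
  shows "(flat K, flat K') \<in> cmso_equiv Sig ar M r"
proof -
  define mix where "mix S = K\<lparr>lab := \<lambda>d. if d \<in> S then lab K' d else lab K d\<rparr>" for S
  have mix_wf: "wf_hg (HS Sig ar) arity (mix S)" for S
  proof -
    have "lab (mix S) e \<in> HS Sig ar \<and> length (inc K e) = arity (lab (mix S) e)" if "e \<in> edges K" for e
      using K K' same that by (cases "e \<in> S") (simp_all add: mix_def wf_hg_def)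
    then show ?thesis using K by (simp add: mix_def wf_hg_def)
  qed
  have mix_equiv: "(flat K, flat (mix S)) \<in> cmso_equiv Sig ar M r" if "finite S" "S \<subseteq> edges K" for S
    using that
  proof (induction S rule: finite_induct)
    case empty
    have "mix {} = K" by (simp add: mix_def)
    then show ?case using cmso_equiv_refl[OF flat_HS[OF K]] by simp
  next
    case (insert e S)
    then have e: "e \<in> edges K" "e \<notin> S" by auto
    have "(flat (mix S), flat (mix (insert e S))) \<in> cmso_equiv Sig ar M r"
    proof (rule flat_relabel_equiv[OF mix_wf mix_wf])
      show "(lab (mix S) e, lab (mix (insert e S)) e) \<in> cmso_equiv Sig ar M r"
        using equiv e by (simp add: mix_def)
    qed (use e in \<open>simp_all add: mix_def\<close>)
    moreover have "(flat K, flat (mix S)) \<in> cmso_equiv Sig ar M r" using insert by simp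
    ultimately show ?case by (rule cmso_equiv_trans[rotated])
  qed
  have "finite (edges K)" using K by (simp add: wf_hg_def)
  then have "(flat K, flat (mix (edges K))) \<in> cmso_equiv Sig ar M r" by (simp add: mix_equiv)
  moreover have "(flat (mix (edges K)), flat K') \<in> cmso_equiv Sig ar M r"
  proof -
    have "models (flat K') \<phi> \<longleftrightarrow> models (flat (mix (edges K))) \<phi>" for \<phi>
      by (rule flat_cong_edges) (simp_all add: mix_def same)
    moreover have "arity (flat K') = arity (flat (mix (edges K)))"
      using same by (simp add: arity_def mix_def)
    ultimately show ?thesis using flat_HS[OF mix_wf] flat_HS[OF K'] by (simp add: cmso_equiv_def)
  qed
  ultimately show ?thesis by (rule cmso_equiv_trans)
qed

lemma subst_vars_wf:
  assumes t: "t \<in> poly_terms Sig ar Xs arx" and \<eta>: "\<eta> \<in> valuations Sig ar Xs arx"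
  shows "wf_hg (HS Sig ar) arity (subst_vars \<eta> t)"
proof -
  have "lab (subst_vars \<eta> t) e \<in> HS Sig ar \<and> length (inc t e) = arity (lab (subst_vars \<eta> t) e)"
    if "e \<in> edges t" for e
  proof -
    have "lab t e \<in> Inl ` HS Sig ar \<union> Inr ` Xs" "length (inc t e) = sum_rank arx (lab t e)"
      using t that by (auto simp: poly_terms_def wf_hg_def)
    then show ?thesis using \<eta> by (auto simp: valuations_def sum_rank_def subst_vars_def)
  qed
  then show ?thesis using t by (auto simp: poly_terms_def wf_hg_def subst_vars_def)
qed

theorem lemma4p12:
  fixes Sig :: "'a set" and ar :: "'a \<Rightarrow> nat" and r :: nat and M :: "nat set"
    and Xs :: "'x set" and arx :: "'x \<Rightarrow> nat"
  assumes "finite Sig" and "finite M"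
  shows "congruence_wrt Sig ar (cmso_equiv Sig ar M r) Xs arx"
  unfolding congruence_wrt_def
proof (intro conjI ballI impI)
  show "equiv (HS Sig ar) (cmso_equiv Sig ar M r)" by (rule cmso_equiv_equiv)
next
  fix t \<eta> \<eta>'
  assume t: "t \<in> poly_terms Sig ar Xs arx" and \<eta>: "\<eta> \<in> valuations Sig ar Xs arx"
    and \<eta>': "\<eta>' \<in> valuations Sig ar Xs arx"
    and vars: "\<forall>x\<in>Xs. (\<eta> x, \<eta>' x) \<in> cmso_equiv Sig ar M r"
  have "(lab (subst_vars \<eta> t) e, lab (subst_vars \<eta>' t) e) \<in> cmso_equiv Sig ar M r"
    if "e \<in> edges (subst_vars \<eta> t)" for e
    using that t vars cmso_equiv_equiv[of Sig ar M r]
    by (auto simp: subst_vars_def poly_terms_def wf_hg_def equiv_def refl_on_def split: sum.splits)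
  then show "(poly_op t \<eta>, poly_op t \<eta>') \<in> cmso_equiv Sig ar M r"
    unfolding poly_op_def
    by (intro flat_relabel_all_equiv subst_vars_wf[OF t \<eta>] subst_vars_wf[OF t \<eta>'])
      (simp_all add: subst_vars_def)
qed

end
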